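(* Let $V$ be an abelian intertwining algebra associated to an abelian group $A$ with normalized abelian $3$-cocycle $(F,\Omega)$. If $z_1,z_2\in\mathbb C^\times$ satisfy $|z_1|>|z_2|>|z_1-z_2|>0$, then $$\langle v',Y(Y(v_1,e^{\log(z_1-z_2)})v_2,e^{\log z_2})v_3\rangle=\mathcal A_{z_1,z_2}(\alpha_1,\alpha_2,\alpha_3)\,\langle v',Y(v_1,e^{\log z_1})Y(v_2,e^{\log z_2})v_3\rangle,$$ where $$\mathcal A_{z_1,z_2}(\alpha_1,\alpha_2,\alpha_3)=\big(\Omega(\alpha_1,\alpha_2)\Omega(\alpha_2,\alpha_1)\big)^{-p_{z_1,z_2}}\big(\Omega(\alpha_1,\alpha_3)\Omega(\alpha_3,\alpha_1)\big)^{p_{z_2,z_2-z_1}}F(\alpha_1,\alpha_2,\alpha_3)^{-1},$$ for any $v_1\in V^{\alpha_1}$, $v_2\in V^{\alpha_2}$, $v_3\in V^{\alpha_3}$, and $v'\in V'$.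
   Context: Normalized abelian $3$-cocycle $(F,\Omega)$: $F:A^3\to\mathbb C^\times$, $\Omega:A^2\to\mathbb C^\times$ satisfying the pentagon identity $F(\alpha_1,\alpha_2,\alpha_3)F(\alpha_1,\alpha_2+\alpha_3,\alpha_4)F(\alpha_2,\alpha_3,\alpha_4)=F(\alpha_1,\alpha_2,\alpha_3+\alpha_4)F(\alpha_1+\alpha_2,\alpha_3,\alpha_4)$, the hexagon identities $F(\alpha_1,\alpha_2,\alpha_3)\Omega(\alpha_1+\alpha_2,\alpha_3)F(\alpha_3,\alpha_1,\alpha_2)=\Omega(\alpha_2,\alpha_3)F(\alpha_1,\alpha_3,\alpha_2)\Omega(\alpha_1,\alpha_3)$ and $F(\alpha_1,\alpha_2,\alpha_3)^{-1}\Omega(\alpha_1,\alpha_2+\alpha_3)F(\alpha_2,\alpha_3,\alpha_1)^{-1}=\Omega(\alpha_1,\alpha_2)F(\alpha_2,\alpha_1,\alpha_3)^{-1}\Omega(\alpha_1,\alpha_3)$, and $F=1$ if any argument is $0$. Fix $\hat b:A^2\to\mathbb C$ with $e^{2\pi i\hat b(\alpha_1,\alpha_2)}=\Omega(\alpha_1,\alpha_2)\Omega(\alpha_2,\alpha_1)$ and set $B(\alpha_1,\alpha_2,\alpha_3)=F(\alpha_1,\alpha_2,\alpha_3)\Omega(\alpha_1,\alpha_2)F(\alpha_2,\alpha_1,\alpha_3)^{-1}$. Abelian intertwining algebra associated to $(A,F,\Omega)$: $A\times\mathbb C$-graded $V=\bigoplus V^\alpha_{(n)}$ (grading restricted: for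 each $\alpha$, $R$, only finitely many nonzero $V^\alpha_{(n)}$ with $\mathrm{Re}\,n\le R$), $Y(v,x)=\sum_{n\in\mathbb C}v_nx^{-n-1}$, $\mathbf 1\in V^0_{(0)}$, $\omega\in V^0_{(2)}$, with $x^{\hat b(\alpha_1,\alpha_2)}Y(v_1,x)v_2\in V^{\alpha_1+\alpha_2}((x))$ for $v_i\in V^{\alpha_i}$; vacuum and creation properties; the Jacobi identity $x_0^{-1}\big(\tfrac{x_1-x_2}{x_0}\big)^{\hat b(\alpha_1,\alpha_2)}\delta\big(\tfrac{x_1-x_2}{x_0}\big)Y(v_1,x_1)Y(v_2,x_2)v_3-B(\alpha_1,\alpha_2,\alpha_3)x_0^{-1}\big(\tfrac{x_2-x_1}{e^{\pi i}x_0}\big)^{\hat b(\alpha_1,\alpha_2)}\delta\big(\tfrac{x_2-x_1}{-x_0}\big)Y(v_2,x_2)Y(v_1,x_1)v_3=F(\alpha_1,\alpha_2,\alpha_3)x_1^{-1}\big(\tfrac{x_2+x_0}{x_1}\big)^{\hat b(\alpha_1,\alpha_3)}\delta\big(\tfrac{x_2+x_0}{x_1}\big)Y(Y(v_1,x_0)v_2,x_2)v_3$; Virasoro relations for $Y(\omega,x)=\sum L(n)x^{-n-2}$ with $V_{(n)}$ the $L(0)$-eigenspace; $L(-1)$-derivative property. $V'=\bigoplus_{\alpha,n}(V^\alpha_{(n)})^*$ is the graded dual with pairing $\langle\cdot,\cdot\rangle$; both sides of the identity are absolutely convergent sums over conformal weights. $\log z=\log|z|+i\arg z$ with $0\le\arg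 z<2\pi$, and complex powers $e^{s\log z}$ are used when substituting into $Y$. For $|z_1|>|z_2|$, the integer $p_{z_1,z_2}$ is defined by $\log(z_1-z_2)=\log z_1+\log(1-z_2/z_1)+2\pi i\,p_{z_1,z_2}$, where $\log(1-z_2/z_1)$ is the standard power series of $\log(1-x)$ at $x=z_2/z_1$. *)

theory Defs
  imports "HOL-Analysis.Analysis"
begin

definition abelian_3cocycle ::
  "('a::ab_group_add \<Rightarrow> 'a \<Rightarrow> 'a \<Rightarrow> complex) \<Rightarrow> ('a \<Rightarrow> 'a \<Rightarrow> complex) \<Rightarrow> bool" where
  "abelian_3cocycle F Om \<longleftrightarrow>
     (\<forall>a b c. F a b c \<noteq> 0) \<and> (\<forall>a b. Om a b \<noteq> 0) \<and>
     (\<forall>a1 a2 a3 a4. F a1 a2 a3 * F a1 (a2 + a3) a4 * F a2 a3 a4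
                     = F a1 a2 (a3 + a4) * F (a1 + a2) a3 a4) \<and>
     (\<forall>a1 a2 a3. F a1 a2 a3 * Om (a1 + a2) a3 * F a3 a1 a2
                  = Om a2 a3 * F a1 a3 a2 * Om a1 a3) \<and>
     (\<forall>a1 a2 a3. inverse (F a1 a2 a3) * Om a1 (a2 + a3) * inverse (F a2 a3 a1)
                  = Om a1 a2 * inverse (F a2 a1 a3) * Om a1 a3) \<and>
     (\<forall>a b. F 0 a b = 1 \<and> F a 0 b = 1 \<and> F a b 0 = 1)"

definition Bfac :: "('a \<Rightarrow> 'a \<Rightarrow> 'a \<Rightarrow> complex) \<Rightarrow> ('a \<Rightarrow> 'a \<Rightarrow> complex) \<Rightarrow> 'a \<Rightarrow> 'a \<Rightarrow> 'a \<Rightarrow> complex" where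
  "Bfac F Om a1 a2 a3 = F a1 a2 a3 * Om a1 a2 * inverse (F a2 a1 a3)"

definition fsum :: "('i \<Rightarrow> 'b::comm_monoid_add) \<Rightarrow> 'b" where
  "fsum f = sum f {i. f i \<noteq> 0}"

text \<open>V is a complex vector space (type 'v with scalar multiplication sc);
  Vh a n is the homogeneous subspace V^a_(n).\<close>

definition decomp ::
  "('a \<Rightarrow> complex \<Rightarrow> 'v::ab_group_add set) \<Rightarrow> 'v \<Rightarrow> ('a \<times> complex \<Rightarrow> 'v) \<Rightarrow> bool" where
  "decomp Vh v c \<longleftrightarrow> finite {p. c p \<noteq> 0} \<and> (\<forall>p. c p \<in> Vh (fst p) (snd p))
                        \<and> v = sum c {p. c p \<noteq> 0}"

definition graded_space ::
  "(complex \<Rightarrow> 'v::ab_group_add \<Rightarrow> 'v) \<Rightarrow> ('a \<Rightarrow> complex \<Rightarrow> 'v set) \<Rightarrow> bool" where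
  "graded_space sc Vh \<longleftrightarrow> vector_space sc \<and> (\<forall>a n. module.subspace sc (Vh a n))
      \<and> (\<forall>v. \<exists>!c. decomp Vh v c)"

definition comp :: "('a \<Rightarrow> complex \<Rightarrow> 'v::ab_group_add set) \<Rightarrow> 'v \<Rightarrow> 'a \<Rightarrow> complex \<Rightarrow> 'v" where
  "comp Vh v a n = (THE c. decomp Vh v c) (a, n)"

definition wtproj :: "('a \<Rightarrow> complex \<Rightarrow> 'v::ab_group_add set) \<Rightarrow> complex \<Rightarrow> 'v \<Rightarrow> 'v" where
  "wtproj Vh n v = fsum (\<lambda>a. comp Vh v a n)"

definition Vgr :: "(complex \<Rightarrow> 'v::ab_group_add \<Rightarrow> 'v) \<Rightarrow> ('a \<Rightarrow> complex \<Rightarrow> 'v set) \<Rightarrow> 'a \<Rightarrow> 'v set" where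
  "Vgr sc Vh a = module.span sc (\<Union>n. Vh a n)"

text \<open>Elements of the graded dual V' = direct sum of (V^a_(n))^*, viewed as
  linear functionals on V vanishing on all but finitely many V^a_(n).\<close>
definition graded_dual ::
  "(complex \<Rightarrow> 'v::ab_group_add \<Rightarrow> 'v) \<Rightarrow> ('a \<Rightarrow> complex \<Rightarrow> 'v set) \<Rightarrow> ('v \<Rightarrow> complex) \<Rightarrow> bool" where
  "graded_dual sc Vh f \<longleftrightarrow> (\<forall>x y. f (x + y) = f x + f y) \<and> (\<forall>c x. f (sc c x) = c * f x)
      \<and> finite {(a, n). \<exists>w\<in>Vh a n. f w \<noteq> 0}"

section \<open>Abelian intertwining algebras\<close>

text \<open>md v k w is the mode v_k w, so that Y(v,x) w = \<Sum>_k (v_k w) x^(-k-1).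
  The Jacobi identity is stated componentwise: the coefficient of
  x0^(-l-b-1) x1^(-m-1) x2^(-k-1) (l integer, m,k complex), obtained by expanding
  the three (generalized) delta-function terms.\<close>

definition AIA ::
  "(complex \<Rightarrow> 'v::ab_group_add \<Rightarrow> 'v) \<Rightarrow> ('a::ab_group_add \<Rightarrow> complex \<Rightarrow> 'v set)
   \<Rightarrow> ('v \<Rightarrow> complex \<Rightarrow> 'v \<Rightarrow> 'v) \<Rightarrow> 'v \<Rightarrow> 'v
   \<Rightarrow> ('a \<Rightarrow> 'a \<Rightarrow> 'a \<Rightarrow> complex) \<Rightarrow> ('a \<Rightarrow> 'a \<Rightarrow> complex) \<Rightarrow> ('a \<Rightarrow> 'a \<Rightarrow> complex) \<Rightarrow> bool" where
  "AIA sc Vh md vac om F Om bh \<longleftrightarrow>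
     abelian_3cocycle F Om \<and>
     (\<forall>a b. exp (2 * pi * \<i> * bh a b) = Om a b * Om b a) \<and>
     graded_space sc Vh \<and>
     \<comment> \<open>grading restricted\<close>
     (\<forall>a (R::real). finite {n. Vh a n \<noteq> {0} \<and> Re n \<le> R}) \<and>
     \<comment> \<open>Y is bilinear\<close>
     (\<forall>u v k w. md (u + v) k w = md u k w + md v k w) \<and>
     (\<forall>c v k w. md (sc c v) k w = sc c (md v k w)) \<and>
     (\<forall>v k w w'. md v k (w + w') = md v k w + md v k w') \<and>
     (\<forall>c v k w. md v k (sc c w) = sc c (md v k w)) \<and>
     \<comment> \<open>x^bh(a1,a2) Y(v1,x)v2 lies in V^(a1+a2)((x))\<close>
     (\<forall>a1 a2 v1 v2. v1 \<in> Vgr sc Vh a1 \<longrightarrow> v2 \<in> Vgr sc Vh a2 \<longrightarrow>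
        (\<forall>k. md v1 k v2 \<in> Vgr sc Vh (a1 + a2)) \<and>
        (\<forall>k. k - bh a1 a2 \<notin> \<int> \<longrightarrow> md v1 k v2 = 0) \<and>
        (\<exists>N::real. \<forall>k. k - bh a1 a2 \<in> \<int> \<and> Re (k - bh a1 a2) > N \<longrightarrow> md v1 k v2 = 0)) \<and>
     \<comment> \<open>vacuum\<close>
     vac \<in> Vh 0 0 \<and>
     (\<forall>k w. md vac k w = (if k = -1 then w else 0)) \<and>
     \<comment> \<open>creation: Y(v,x)1 \<in> V[[x]] and its constant term is v\<close>
     (\<forall>v k. (\<forall>j::nat. k \<noteq> - 1 - of_nat j) \<longrightarrow> md v k vac = 0) \<and>
     (\<forall>v. md v (-1) vac = v) \<and>
     \<comment> \<open>conformal vector and Virasoro relations, L(n) = om_(n+1)\<close>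
     om \<in> Vh 0 2 \<and>
     (\<exists>cc::complex. \<forall>(m::int) (n::int) w.
        md om (of_int m + 1) (md om (of_int n + 1) w) - md om (of_int n + 1) (md om (of_int m + 1) w)
        = sc (of_int (m - n)) (md om (of_int (m + n) + 1) w)
          + (if m + n = 0 then sc ((of_int m ^ 3 - of_int m) / 12 * cc) w else 0)) \<and>
     \<comment> \<open>V_(n) is the L(0)-eigenspace with eigenvalue n\<close>
     (\<forall>a n w. w \<in> Vh a n \<longrightarrow> md om 1 w = sc n w) \<and>
     \<comment> \<open>L(-1)-derivative property: Y(L(-1)v,x) = d/dx Y(v,x)\<close>
     (\<forall>v k w. md (md om 0 v) k w = sc (- k) (md v (k - 1) w)) \<and>
     \<comment> \<open>Jacobi identity (componentwise)\<close>
     (\<forall>a1 a2 a3 v1 v2 v3 (l::int) m k.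
        v1 \<in> Vgr sc Vh a1 \<longrightarrow> v2 \<in> Vgr sc Vh a2 \<longrightarrow> v3 \<in> Vgr sc Vh a3 \<longrightarrow>
        (let b = bh a1 a2; c = bh a1 a3 in
          fsum (\<lambda>i::nat. sc ((-1) ^ i * ((of_int l + b) gchoose i))
                  (md v1 (m + of_int l + b - of_nat i) (md v2 (k + of_nat i) v3)))
          - sc (Bfac F Om a1 a2 a3 * exp (- pi * \<i> * b) * (-1) powi l)
              (fsum (\<lambda>i::nat. sc ((-1) ^ i * ((of_int l + b) gchoose i))
                  (md v2 (k + of_int l + b - of_nat i) (md v1 (m + of_nat i) v3))))
          = (if m - c \<in> \<int> then
               sc (F a1 a2 a3) (fsum (\<lambda>j::nat. sc (m gchoose j)
                  (md (md v1 (of_int l + b + of_nat j) v2) (k + m - of_nat j) v3)))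
             else 0)))"

text \<open>log z = log|z| + i arg z with 0 \<le> arg z < 2 pi.\<close>
definition arg0 :: "complex \<Rightarrow> real" where
  "arg0 z = (if 0 \<le> Arg z then Arg z else Arg z + 2 * pi)"

definition lg :: "complex \<Rightarrow> complex" where
  "lg z = complex_of_real (ln (cmod z)) + \<i> * complex_of_real (arg0 z)"

definition cpw :: "complex \<Rightarrow> complex \<Rightarrow> complex" where
  "cpw z s = exp (s * lg z)"

definition log1m_series :: "complex \<Rightarrow> complex" where
  "log1m_series x = - (\<Sum>n. x ^ Suc n / of_nat (Suc n))"

definition pint :: "complex \<Rightarrow> complex \<Rightarrow> int" where
  "pint z1 z2 = (THE p::int. lg (z1 - z2) = lg z1 + log1m_series (z2 / z1) + 2 * pi * \<i> * of_int p)"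

definition Afac ::
  "('a::ab_group_add \<Rightarrow> 'a \<Rightarrow> 'a \<Rightarrow> complex) \<Rightarrow> ('a \<Rightarrow> 'a \<Rightarrow> complex) \<Rightarrow> complex \<Rightarrow> complex
   \<Rightarrow> 'a \<Rightarrow> 'a \<Rightarrow> 'a \<Rightarrow> complex" where
  "Afac F Om z1 z2 a1 a2 a3 =
     (Om a1 a2 * Om a2 a1) powi (- pint z1 z2) * (Om a1 a3 * Om a3 a1) powi (pint z2 (z2 - z1))
     * inverse (F a1 a2 a3)"

section \<open>Matrix coefficients as sums over conformal weights\<close>

text \<open>n-th term of <v', Y(v1,e^log z1) Y(v2,e^log z2) v3>: the product with the
  projection onto V_(n) inserted between the two vertex operators.\<close>
definition prod_term ::
  "('a \<Rightarrow> complex \<Rightarrow> 'v::ab_group_add set) \<Rightarrow> ('v \<Rightarrow> complex \<Rightarrow> 'v \<Rightarrow> 'v) \<Rightarrow> ('v \<Rightarrow> complex)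
   \<Rightarrow> 'v \<Rightarrow> 'v \<Rightarrow> 'v \<Rightarrow> complex \<Rightarrow> complex \<Rightarrow> complex \<Rightarrow> complex" where
  "prod_term Vh md v' v1 v2 v3 z1 z2 n =
     fsum (\<lambda>(m, k). v' (md v1 m (wtproj Vh n (md v2 k v3))) * cpw z1 (- m - 1) * cpw z2 (- k - 1))"

text \<open>n-th term of <v', Y(Y(v1,e^log z0) v2, e^log z2) v3>: the projection onto
  V_(n) applied to Y(v1,e^log z0) v2.\<close>
definition iter_term ::
  "('a \<Rightarrow> complex \<Rightarrow> 'v::ab_group_add set) \<Rightarrow> ('v \<Rightarrow> complex \<Rightarrow> 'v \<Rightarrow> 'v) \<Rightarrow> ('v \<Rightarrow> complex)
   \<Rightarrow> 'v \<Rightarrow> 'v \<Rightarrow> 'v \<Rightarrow> complex \<Rightarrow> complex \<Rightarrow> complex \<Rightarrow> complex" where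
  "iter_term Vh md v' v1 v2 v3 z0 z2 n =
     fsum (\<lambda>(r, s). v' (md (wtproj Vh n (md v1 r v2)) s v3) * cpw z0 (- r - 1) * cpw z2 (- s - 1))"

end

theory Submission
  imports Defs "HOL-Computational_Algebra.Formal_Power_Series"
begin

text \<open>By linearity in \<open>v1\<close>, \<open>v2\<close>, \<open>v3\<close> and \<open>v'\<close> it suffices to treat homogeneous
  vectors and a functional supported on a single weight space. Then the truncation condition
  and the weights leave one pair of modes per power, so the product and the iterate are power
  series \<open>\<Sum> C j * t ^ j\<close> and \<open>\<Sum> D j * u ^ j\<close> in \<open>t = z2 / z1\<close> and \<open>u = z0 / z2\<close>,
  \<open>z0 = z1 - z2\<close>. Two instances of the Jacobi identity show that \<open>(1 - t) ^ (r + 1)\<close> times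
  the first series is a polynomial \<open>P t\<close>, and that for suitable \<open>m\<close> the second series times
  \<open>(1 + u) ^ m\<close> is \<open>inverse (F a1 a2 a3)\<close> times a polynomial in \<open>1 + u\<close> built from \<open>P\<close>.
  As \<open>1 - t = z0 / z1\<close> and \<open>1 + u = z1 / z2\<close>, both closed forms are branches of one function
  of \<open>z1\<close>, \<open>z2\<close>; the integers \<open>pint z1 z2\<close> and \<open>pint z2 (z2 - z1)\<close> measure the change of
  branch of the logarithms, and the resulting monodromy is the factor \<open>Afac\<close>.\<close>

lemma fsum_eq_sum:
  assumes "finite S" and "\<And>x. x \<notin> S \<Longrightarrow> f x = 0"
  shows "fsum f = sum f S"
  unfolding fsum_def using assms by (intro sum.mono_neutral_left) auto

lemma fsum_neutral: "(\<And>x. f x = 0) \<Longrightarrow> fsum f = 0"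
  unfolding fsum_def by simp

lemma fsum_eq_single: "(\<And>x. x \<noteq> a \<Longrightarrow> f x = 0) \<Longrightarrow> fsum f = f a"
  by (subst fsum_eq_sum[of "{a}"]) auto

lemma (in additive) fsum:
  assumes "finite S" and "\<And>x. x \<notin> S \<Longrightarrow> g x = 0"
  shows "f (fsum g) = (\<Sum>x\<in>S. f (g x))"
  using assms by (simp add: fsum_eq_sum sum)

lemma
  fixes f :: "'i \<Rightarrow> 'a \<Rightarrow> 'b::comm_monoid_add"
  assumes I: "finite I" and fin: "\<And>i. i \<in> I \<Longrightarrow> finite {x. f i x \<noteq> 0}"
  shows finite_support_sum: "finite {x. (\<Sum>i\<in>I. f i x) \<noteq> 0}"
    and fsum_sum: "fsum (\<lambda>x. \<Sum>i\<in>I. f i x) = (\<Sum>i\<in>I. fsum (f i))"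
proof -
  define U where "U = (\<Union>i\<in>I. {x. f i x \<noteq> 0})"
  have U: "finite U" unfolding U_def using I fin by blast
  have sub: "{x. (\<Sum>i\<in>I. f i x) \<noteq> 0} \<subseteq> U"
    unfolding U_def by (blast elim: sum.not_neutral_contains_not_neutral)
  show "finite {x. (\<Sum>i\<in>I. f i x) \<noteq> 0}" using finite_subset[OF sub U] .
  have "fsum (\<lambda>x. \<Sum>i\<in>I. f i x) = (\<Sum>x\<in>U. \<Sum>i\<in>I. f i x)"
    by (rule fsum_eq_sum[OF U]) (use sub in blast)
  also have "\<dots> = (\<Sum>i\<in>I. \<Sum>x\<in>U. f i x)" by (rule sum.swap)
  also have "\<dots> = (\<Sum>i\<in>I. fsum (f i))"
    by (intro sum.cong refl fsum_eq_sum[OF U, symmetric]) (auto simp: U_def)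
  finally show "fsum (\<lambda>x. \<Sum>i\<in>I. f i x) = (\<Sum>i\<in>I. fsum (f i))" .
qed

lemma finite_of_nat_eq: "finite {j::nat. of_nat j = (c::'a::semiring_char_0)}"
proof -
  have "{j::nat. of_nat j = c} = of_nat -` {c}" by auto
  then show ?thesis by (simp add: finite_vimageI inj_of_nat)
qed

lemma has_sum_sum:
  fixes f :: "'i \<Rightarrow> 'a \<Rightarrow> 'b::topological_comm_monoid_add"
  assumes "finite I" and "\<And>i. i \<in> I \<Longrightarrow> (f i has_sum s i) A"
  shows "((\<lambda>x. \<Sum>i\<in>I. f i x) has_sum (\<Sum>i\<in>I. s i)) A"
  using assms by (induction I rule: finite_induct) (auto intro: has_sum_add)

lemma has_sum_supported_on_progression:
  fixes f :: "'c::ring_char_0 \<Rightarrow> 'a::banach"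
  assumes on: "\<And>j. f (b + of_nat j) = g j"
    and off: "\<And>x. x \<notin> range (\<lambda>j. b + of_nat j) \<Longrightarrow> f x = 0"
    and "summable (\<lambda>j. norm (g j))" and "g sums S"
  shows "(f has_sum S) UNIV"
proof -
  let ?h = "\<lambda>j::nat. b + of_nat j"
  have "inj ?h" by (auto simp: inj_on_def)
  moreover have "(g has_sum S) UNIV" by (rule norm_summable_imp_has_sum) fact+
  moreover have "f \<circ> ?h = g" using on by auto
  ultimately have "(f has_sum S) (range ?h)" using has_sum_reindex by metis
  then show ?thesis by (rule has_sum_cong_neutral[THEN iffD1, rotated -1]) (auto simp: off)
qed

section \<open>Binomial series\<close>

lemma gbinomial_inversion:
  fixes c :: "nat \<Rightarrow> complex"
  shows "c j = (\<Sum>p=0..j. ((-a) gchoose (j - p)) * (\<Sum>i=0..p. (a gchoose i) * c (p - i)))"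
proof -
  have "fps_binomial (-a) * fps_binomial a = 1"
    using fps_binomial_add_mult[of "-a" a] by simp
  then have "fps_binomial (-a) * (fps_binomial a * Abs_fps c) = Abs_fps c"
    by (simp only: mult.assoc[symmetric] mult_1)
  then have "fps_nth (fps_binomial (-a) * (fps_binomial a * Abs_fps c)) j = fps_nth (Abs_fps c) j"
    by (rule arg_cong)
  then have "(\<Sum>i=0..j. ((-a) gchoose i) * (\<Sum>k=0..j - i. (a gchoose k) * c (j - i - k))) = c j"
    by (simp add: fps_mult_nth)
  moreover have "(\<Sum>p=0..j. ((-a) gchoose (j - p)) * (\<Sum>i=0..p. (a gchoose i) * c (p - i)))
      = (\<Sum>i=0..j. ((-a) gchoose i) * (\<Sum>k=0..j - i. (a gchoose k) * c (j - i - k)))"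
    by (subst sum.atLeastAtMost_rev) (auto intro!: sum.cong)
  ultimately show ?thesis by simp
qed

lemma gbinomial_inversion_poly:
  fixes c :: "nat \<Rightarrow> complex"
  assumes "\<And>q. J < q \<Longrightarrow> (\<Sum>i=0..q. (a gchoose i) * c (q - i)) = 0"
  shows "c j = (\<Sum>p\<in>{0..j} \<inter> {..J}. ((-a) gchoose (j - p)) * (\<Sum>i=0..p. (a gchoose i) * c (p - i)))"
  by (subst gbinomial_inversion[of c j a], rule sum.mono_neutral_right) (auto simp: assms)

lemma summable_norm_gbinomial:
  fixes w a :: complex
  assumes "norm w < 1"
  shows "summable (\<lambda>n. norm ((a gchoose n) * w ^ n))"
proof -
  define x :: complex where "x = of_real ((1 + norm w) / 2)"
  have "norm x = \<bar>(1 + norm w) / 2\<bar>" by (simp only: x_def norm_of_real)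
  then have "norm x < 1" "norm w < norm x" using assms by auto
  moreover from this have "summable (\<lambda>n. (a gchoose n) * x ^ n)"
    using gen_binomial_complex sums_summable by blast
  ultimately show ?thesis using powser_insidea by blast
qed

text \<open>If \<open>(1 + X) ^ \<alpha> * c\<close> is a polynomial \<open>Q\<close> of degree at most \<open>J\<close>,
  then \<open>\<Sum> c j * w ^ j = (1 + w) powr - \<alpha> * Q w\<close> inside the unit disc.\<close>
lemma sums_binomial_times_poly:
  fixes alpha w :: complex and c :: "nat \<Rightarrow> complex"
  assumes Q: "\<And>q. J < q \<Longrightarrow> (\<Sum>i=0..q. (alpha gchoose i) * c (q - i)) = 0" and w: "norm w < 1"
  shows "summable (\<lambda>j. norm (c j * w ^ j))"
    and "(\<lambda>j. c j * w ^ j) sums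
           ((1 + w) powr (- alpha) * (\<Sum>q\<le>J. (\<Sum>i=0..q. (alpha gchoose i) * c (q - i)) * w ^ q))"
proof -
  define Q where "Q q = (\<Sum>i=0..q. (alpha gchoose i) * c (q - i))" for q
  define b where "b n = ((- alpha) gchoose n) * w ^ n" for n
  define g where "g p j = (if p \<le> j then Q p * w ^ p * b (j - p) else 0)" for p j
  have c_split: "c j * w ^ j = (\<Sum>p\<le>J. g p j)" for j
  proof -
    have "c j = (\<Sum>p\<in>{0..j} \<inter> {..J}. ((- alpha) gchoose (j - p)) * Q p)"
      unfolding Q_def by (rule gbinomial_inversion_poly[OF Q])
    then have "c j * w ^ j = (\<Sum>p\<in>{0..j} \<inter> {..J}. ((- alpha) gchoose (j - p)) * Q p * w ^ j)"
      by (simp add: sum_distrib_right)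
    also have "\<dots> = (\<Sum>p\<in>{0..j} \<inter> {..J}. g p j)"
      by (intro sum.cong refl) (auto simp: g_def b_def power_add[symmetric])
    also have "\<dots> = (\<Sum>p\<le>J. g p j)"
      by (rule sum.mono_neutral_left) (auto simp: g_def)
    finally show ?thesis .
  qed
  have g_sums: "g p sums (Q p * w ^ p * (1 + w) powr (- alpha))" for p
  proof -
    have "(\<lambda>i. g p (i + p)) sums (Q p * w ^ p * (1 + w) powr (- alpha))"
      unfolding g_def b_def using sums_mult[OF gen_binomial_complex[OF w]] by simp
    moreover have "(\<Sum>i<p. g p i) = 0" by (simp add: g_def)
    ultimately show ?thesis by (simp add: sums_iff_shift)
  qed
  have "(\<lambda>j. \<Sum>p\<le>J. g p j) sums (\<Sum>p\<le>J. Q p * w ^ p * (1 + w) powr (- alpha))"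
    by (rule sums_sum) (rule g_sums)
  then show "(\<lambda>j. c j * w ^ j) sums ((1 + w) powr (- alpha) * (\<Sum>q\<le>J. Q q * w ^ q))"
    by (simp add: c_split sum_distrib_left mult_ac)
  have g_summable: "summable (\<lambda>j. norm (g p j))" for p
  proof -
    have "summable (\<lambda>i. norm (g p (i + p)))"
      unfolding g_def b_def using summable_mult[OF summable_norm_gbinomial[OF w, of "- alpha"], of "norm (Q p * w ^ p)"]
      by (simp add: norm_mult)
    then show ?thesis using summable_iff_shift[where f="\<lambda>j. norm (g p j)" and k=p] by simp
  qed
  show "summable (\<lambda>j. norm (c j * w ^ j))"
    by (rule summable_comparison_test'[of "\<lambda>j. \<Sum>p\<le>J. norm (g p j)" 0])
      (auto simp: c_split norm_sum intro: summable_sum g_summable)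
qed

lemma sum_gbinomial_alternating:
  "(\<Sum>i=0..q. (a gchoose i) * ((-1) ^ (q - i) * c (q - i)))
     = (-1) ^ q * (\<Sum>i=0..q. (-1) ^ i * (a gchoose i) * (c (q - i) :: complex))"
proof -
  have "(-1::complex) ^ (q - i) = (-1) ^ q * (-1) ^ i" if "i \<le> q" for i
    using that by (auto simp: minus_one_power_iff)
  then show ?thesis unfolding sum_distrib_left by (intro sum.cong refl) (simp add: mult_ac)
qed

lemma sums_reflected_binomial_times_poly:
  fixes alpha w :: complex and c :: "nat \<Rightarrow> complex"
  assumes Q: "\<And>q. J < q \<Longrightarrow> (\<Sum>i=0..q. (-1) ^ i * (alpha gchoose i) * c (q - i)) = 0"
    and w: "norm w < 1"
  shows "summable (\<lambda>j. norm (c j * w ^ j))"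
    and "(\<lambda>j. c j * w ^ j) sums
          ((1 - w) powr (- alpha) * (\<Sum>q\<le>J. (\<Sum>i=0..q. (-1) ^ i * (alpha gchoose i) * c (q - i)) * w ^ q))"
proof -
  define c' where "c' j = (-1) ^ j * c j" for j
  have sq: "(-1::complex) ^ j * (-1) ^ j = 1" for j
    by (simp flip: power_add power_mult_distrib)
  have twist: "c' j * (- w) ^ j = c j * w ^ j" for j
    using sq[of j] unfolding c'_def power_minus[of w] by (simp add: mult_ac)
  have twist_poly: "(\<Sum>i=0..q. (alpha gchoose i) * c' (q - i)) * (- w) ^ q
      = (\<Sum>i=0..q. (-1) ^ i * (alpha gchoose i) * c (q - i)) * w ^ q" for q
    using sq[of q] unfolding c'_def sum_gbinomial_alternating power_minus[of w] by (simp add: mult_ac)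
  have "(\<Sum>i=0..q. (alpha gchoose i) * c' (q - i)) = 0" if "J < q" for q
    using Q[OF that] by (simp add: c'_def sum_gbinomial_alternating)
  note S = sums_binomial_times_poly[of J alpha c' "- w", OF this]
  show "summable (\<lambda>j. norm (c j * w ^ j))"
    using S(1) w unfolding twist by simp
  show "(\<lambda>j. c j * w ^ j) sums
          ((1 - w) powr (- alpha) * (\<Sum>q\<le>J. (\<Sum>i=0..q. (-1) ^ i * (alpha gchoose i) * c (q - i)) * w ^ q))"
    using S(2) w unfolding twist twist_poly by simp
qed

text \<open>In power series: \<open>(1 - X) ^ (a - 1 - q) * C = (1 - X) ^ (- 1 - q) * P\<close> with
  \<open>P = (1 - X) ^ a * C\<close>, and \<open>(1 - X) ^ (- 1 - q)\<close> has the coefficients \<open>(i + q) choose i\<close>.\<close>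
lemma reflected_binomial_convolution_shift:
  fixes C :: "nat \<Rightarrow> complex" and a :: complex
  defines "P \<equiv> \<lambda>q. \<Sum>i=0..q. (-1) ^ i * (a gchoose i) * C (q - i)"
  shows "(\<Sum>i=0..n. (-1) ^ i * ((a - 1 - of_nat q) gchoose i) * C (n - i))
       = (\<Sum>i=0..n. of_nat ((i + q) choose i) * P (n - i))"
proof -
  define R :: "complex \<Rightarrow> complex fps" where "R b = fps_binomial b oo - fps_X" for b
  have R_nth: "fps_nth (R b) i = (-1) ^ i * (b gchoose i)" for b i
    by (simp add: R_def fps_compose_uminus')
  have R_add: "R (b + c) = R b * R c" for b c
    by (simp add: R_def fps_binomial_add_mult fps_compose_mult_distrib)
  have P: "Abs_fps P = R a * Abs_fps C"
    by (rule fps_ext) (simp add: P_def fps_mult_nth R_nth mult.assoc)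
  have "R (-1 - of_nat q) * R a = R (a - 1 - of_nat q)"
    by (simp add: R_add[symmetric] algebra_simps)
  then have "R (-1 - of_nat q) * Abs_fps P = R (a - 1 - of_nat q) * Abs_fps C"
    by (simp add: P mult.assoc[symmetric])
  then have "fps_nth (R (a - 1 - of_nat q) * Abs_fps C) n = fps_nth (R (-1 - of_nat q) * Abs_fps P) n"
    by simp
  then have "(\<Sum>i=0..n. fps_nth (R (a - 1 - of_nat q)) i * C (n - i))
      = (\<Sum>i=0..n. fps_nth (R (-1 - of_nat q)) i * P (n - i))"
    by (simp only: fps_mult_nth fps_nth_Abs_fps)
  moreover have "fps_nth (R (-1 - of_nat q)) i = of_nat ((i + q) choose i)" for i
  proof -
    have "(-1 - of_nat q gchoose i) = (-1) ^ i * ((of_nat (i + q) :: complex) gchoose i)"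
      using gbinomial_negated_upper[of "-1 - of_nat q" i] by (simp add: algebra_simps)
    then show ?thesis by (simp add: R_nth binomial_gbinomial flip: power_add power_mult_distrib)
  qed
  ultimately show ?thesis unfolding R_nth[symmetric] by simp
qed

lemma sum_triangle_reindex:
  fixes g :: "nat \<Rightarrow> nat \<Rightarrow> 'b::comm_monoid_add"
  shows "(\<Sum>q\<le>h. \<Sum>i\<le>h-q. g q i) = (\<Sum>p\<le>h. \<Sum>q\<le>h-p. g q (h - p - q))"
proof -
  have "(\<Sum>q\<le>h. \<Sum>i\<le>h-q. g q i) = sum (\<lambda>(q,i). g q i) (SIGMA q:{..h}. {..h-q})"
    by (rule sum.Sigma) auto
  also have "\<dots> = sum (\<lambda>(p,q). g q (h - p - q)) (SIGMA p:{..h}. {..h-p})"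
    by (rule sum.reindex_bij_witness[where i="\<lambda>(p,q). (q, h - p - q)" and j="\<lambda>(q,i). (h - q - i, q)"])
      auto
  also have "\<dots> = (\<Sum>p\<le>h. \<Sum>q\<le>h-p. g q (h - p - q))"
    by (rule sum.Sigma[symmetric]) auto
  finally show ?thesis .
qed

lemma binomial_reexpansion:
  fixes P :: "nat \<Rightarrow> complex" and u :: complex
  assumes "J \<le> h" and "\<And>p. J < p \<Longrightarrow> P p = 0"
  shows "(\<Sum>q\<le>h. (\<Sum>i=0..h-q. of_nat ((i + q) choose i) * P (h - q - i)) * u ^ q)
       = (\<Sum>p\<le>J. P p * (1 + u) ^ (h - p))"
proof -
  have "(\<Sum>q\<le>h. (\<Sum>i=0..h-q. of_nat ((i + q) choose i) * P (h - q - i)) * u ^ q)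
      = (\<Sum>q\<le>h. \<Sum>i\<le>h-q. of_nat ((i + q) choose i) * P (h - q - i) * u ^ q)"
    by (simp add: sum_distrib_right atLeast0AtMost)
  also have "\<dots> = (\<Sum>p\<le>h. \<Sum>q\<le>h-p.
      of_nat ((h - p - q + q) choose (h - p - q)) * P (h - q - (h - p - q)) * u ^ q)"
    by (rule sum_triangle_reindex)
  also have "\<dots> = (\<Sum>p\<le>h. P p * (\<Sum>q\<le>h-p. of_nat ((h - p) choose q) * u ^ q * 1 ^ (h - p - q)))"
    unfolding sum_distrib_left
  proof (intro sum.cong refl)
    fix p q assume "p \<in> {..h}" "q \<in> {..h-p}"
    then have "h - p - q + q = h - p" "h - q - (h - p - q) = p"
      and "(h - p) choose (h - p - q) = (h - p) choose q"
      using binomial_symmetric[of q "h - p"] by auto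
    then show "of_nat ((h - p - q + q) choose (h - p - q)) * P (h - q - (h - p - q)) * u ^ q
        = P p * (of_nat ((h - p) choose q) * u ^ q * 1 ^ (h - p - q))" by simp
  qed
  also have "\<dots> = (\<Sum>p\<le>h. P p * (u + 1) ^ (h - p))"
    by (simp only: binomial_ring[symmetric])
  also have "\<dots> = (\<Sum>p\<le>J. P p * (u + 1) ^ (h - p))"
    by (rule sum.mono_neutral_right) (use assms in auto)
  finally show ?thesis by (simp add: add.commute)
qed

lemma unitriangular_system_zero:
  fixes x :: "nat \<Rightarrow> complex"
  assumes "\<And>q. q \<le> H \<Longrightarrow> (\<Sum>i=0..q. a q i * x (q - i)) = 0" and "\<And>q. a q 0 = 1"
  shows "q \<le> H \<Longrightarrow> x q = 0"
proof (induction q rule: less_induct)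
  case (less q)
  have "(\<Sum>i=0..q. a q i * x (q - i)) = a q 0 * x q + (\<Sum>i=Suc 0..q. a q i * x (q - i))"
    by (simp add: sum.atLeast_Suc_atMost)
  also have "(\<Sum>i=Suc 0..q. a q i * x (q - i)) = 0"
    by (rule sum.neutral) (use less in auto)
  finally show ?case using assms less.prems by simp
qed

section \<open>Logarithms and complex powers\<close>

lemma exp_lg: "z \<noteq> 0 \<Longrightarrow> exp (lg z) = z"
proof -
  assume z: "z \<noteq> 0"
  have "cis (arg0 z) = cis (Arg z)"
    by (simp add: arg0_def cis_mult[symmetric])
  then have "exp (lg z) = rcis (cmod z) (Arg z)"
    using z by (simp add: lg_def exp_add cis_conv_exp exp_of_real rcis_def)
  then show ?thesis by (simp add: rcis_cmod_Arg)
qed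

lemma cpw_add_of_nat: "z \<noteq> 0 \<Longrightarrow> cpw z (a + of_nat j) = cpw z a * z ^ j"
  by (simp add: cpw_def distrib_right exp_add exp_of_nat_mult exp_lg)

lemma cpw_diff_of_nat: "z \<noteq> 0 \<Longrightarrow> cpw z (a - of_nat j) = cpw z a * inverse z ^ j"
  by (simp add: cpw_def left_diff_distrib exp_diff exp_of_nat_mult exp_lg divide_inverse power_inverse)

lemma log1m_series_eq_Ln:
  assumes "norm x < 1"
  shows "log1m_series x = Ln (1 - x)"
proof -
  have "(\<lambda>n. - (x ^ n / of_nat n)) sums Ln (1 - x)"
    using Ln_series'[of "-x"] assms by simp
  then have "(\<lambda>n. - (x ^ Suc n / of_nat (Suc n))) sums Ln (1 - x)"
    using sums_Suc_iff[of "\<lambda>n. - (x ^ n / of_nat n)"] by simp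
  then have "(\<lambda>n. x ^ Suc n / of_nat (Suc n)) sums (- Ln (1 - x))"
    using sums_minus by fastforce
  then show ?thesis unfolding log1m_series_def by (simp add: sums_iff)
qed

lemma lg_diff_pint:
  assumes "cmod z2 < cmod z1" and "z1 \<noteq> z2"
  shows "lg (z1 - z2) = lg z1 + Ln (1 - z2 / z1) + 2 * pi * \<i> * of_int (pint z1 z2)"
proof -
  have z1: "z1 \<noteq> 0" using assms by auto
  have small: "norm (z2 / z1) < 1" using assms z1 by (simp add: norm_divide divide_less_eq)
  then have "1 - z2 / z1 \<noteq> 0" by auto
  then have "exp (lg (z1 - z2)) = exp (lg z1 + Ln (1 - z2 / z1))"
    using z1 assms(2) by (simp add: exp_add exp_lg right_diff_distrib)
  then obtain n :: int where n: "lg (z1 - z2) = lg z1 + Ln (1 - z2 / z1) + of_int (2 * n) * pi * \<i>"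
    by (auto simp: exp_eq)
  let ?P = "\<lambda>p::int. lg (z1 - z2) = lg z1 + log1m_series (z2 / z1) + 2 * pi * \<i> * of_int p"
  have "?P n" using n log1m_series_eq_Ln[OF small] by (simp add: algebra_simps)
  moreover have "p = n" if "?P p" for p
    using that \<open>?P n\<close> by simp
  ultimately have "?P (pint z1 z2)"
    unfolding pint_def by (rule theI)
  then show ?thesis using log1m_series_eq_Ln[OF small] by simp
qed

lemma exp_pi_of_int_powi: "exp (- pi * \<i> * of_int t) * (-1) powi (- t) = 1"
proof -
  have "exp (- pi * \<i> * of_int t) = exp (of_real pi * \<i>) powi (- t)"
    by (subst exp_power_int) (simp add: algebra_simps)
  then show ?thesis by (simp add: power_int_mult_distrib[symmetric])
qed

text \<open>Both sides are exponentials of linear combinations of logarithms; substituting the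
  two branch relations, their exponents differ by \<open>2 \<pi> i\<close> times an integer.\<close>
lemma cpw_branch_change:
  fixes z0 z1 z2 r s m k b c :: complex and p01 p12 :: int and p :: nat
  assumes nz: "z1 \<noteq> 0" "z2 \<noteq> 0" "1 - z2 / z1 \<noteq> 0" "1 + z0 / z2 \<noteq> 0"
    and lg0: "lg z0 = lg z1 + Ln (1 - z2 / z1) + 2 * pi * \<i> * of_int p01"
    and lg1: "lg z1 = lg z2 + Ln (1 + z0 / z2) + 2 * pi * \<i> * of_int p12"
    and b: "r + 1 - b \<in> \<int>" and c: "c + r - m \<in> \<int>" and "s + r = m + k"
  shows "cpw z0 (- r - 1) * cpw z2 (- s - 1) * (1 + z0 / z2) powr (r - m - of_nat p)
     = exp (2 * pi * \<i> * b) powi (- p01) * exp (2 * pi * \<i> * c) powi p12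
       * (cpw z1 (- m - 1) * cpw z2 (- k - 1) * (1 - z2 / z1) powr (- (r + 1)) * (z2 / z1) ^ p)"
proof -
  define A B where "A = Ln (1 - z2 / z1)" and "B = Ln (1 + z0 / z2)"
  obtain n1 where n1: "r + 1 - b = of_int n1" using b by (auto elim: Ints_cases)
  obtain n2 where n2: "c + r - m = of_int n2" using c by (auto elim: Ints_cases)
  define X where "X = (- r - 1) * lg z0 + (- s - 1) * lg z2 + (r - m - of_nat p) * B"
  define Y where "Y = of_int (- p01) * (2 * pi * \<i> * b) + of_int p12 * (2 * pi * \<i> * c)
      + ((- m - 1) * lg z1 + (- k - 1) * lg z2 + (- (r + 1)) * A + of_nat p * (lg z2 - lg z1))"
  define N where "N = p01 * n1 + p12 * (n2 - int p)"
  have q: "z2 / z1 = exp (lg z2 - lg z1)" using nz by (simp add: exp_diff exp_lg)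
  have "cpw z0 (- r - 1) * cpw z2 (- s - 1) * (1 + z0 / z2) powr (r - m - of_nat p) = exp X"
    using nz by (simp add: X_def B_def cpw_def powr_def exp_add)
  moreover have "exp (2 * pi * \<i> * b) powi (- p01) * exp (2 * pi * \<i> * c) powi p12
       * (cpw z1 (- m - 1) * cpw z2 (- k - 1) * (1 - z2 / z1) powr (- (r + 1)) * (z2 / z1) ^ p)
      = exp Y"
    using nz q by (simp add: Y_def A_def cpw_def powr_def exp_add exp_power_int exp_of_nat_mult
        exp_diff exp_minus divide_inverse_commute)
  moreover have "Y = X + 2 * of_int N * pi * \<i>"
  proof -
    have s: "s = m + k - r" and b: "b = r + 1 - of_int n1" and c: "c = of_int n2 - r + m"
      using \<open>s + r = m + k\<close> n1 n2 by (simp_all add: algebra_simps)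
    have A: "A = lg z0 - lg z1 - 2 * pi * \<i> * of_int p01"
      and B: "B = lg z1 - lg z2 - 2 * pi * \<i> * of_int p12"
      using lg0 lg1 by (simp_all add: A_def B_def)
    show ?thesis unfolding X_def Y_def N_def A B s b c by (simp add: algebra_simps)
  qed
  moreover have "exp (2 * of_int N * pi * \<i>) = 1" by (rule exp_integer_2pi) simp
  ultimately show ?thesis by (simp add: exp_add)
qed

locale graded_vector_space =
  fixes sc :: "complex \<Rightarrow> 'v::ab_group_add \<Rightarrow> 'v" and Vh :: "'a \<Rightarrow> complex \<Rightarrow> 'v set"
  assumes graded: "graded_space sc Vh"
begin

sublocale vector_space sc
  using graded unfolding graded_space_def by blast

lemma subspace_Vh: "subspace (Vh a n)"
  using graded unfolding graded_space_def by blast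

definition hpart :: "'v \<Rightarrow> 'a \<times> complex \<Rightarrow> 'v" where
  "hpart v = (THE c. decomp Vh v c)"

lemma unique_decomp: "\<exists>!c. decomp Vh v c"
  using graded unfolding graded_space_def by blast

lemma decomp_hpart: "decomp Vh v (hpart v)"
  unfolding hpart_def by (rule theI'[OF unique_decomp])

lemma hpart_unique: "decomp Vh v c \<Longrightarrow> hpart v = c"
  unfolding hpart_def by (rule the1_equality[OF unique_decomp])

lemma comp_eq_hpart: "comp Vh v a n = hpart v (a, n)"
  unfolding comp_def hpart_def by simp

lemma hpart_in_Vh: "hpart v p \<in> Vh (fst p) (snd p)"
  using decomp_hpart[of v] unfolding decomp_def by (elim conjE allE)

lemma finite_hpart_support: "finite {p. hpart v p \<noteq> 0}"
  using decomp_hpart[of v] unfolding decomp_def by (rule conjunct1)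

lemma sum_hpart: "v = sum (hpart v) {p. hpart v p \<noteq> 0}"
  using decomp_hpart[of v] unfolding decomp_def by (elim conjE)

lemma sum_hpart_superset:
  "finite S \<Longrightarrow> {p. hpart v p \<noteq> 0} \<subseteq> S \<Longrightarrow> v = sum (hpart v) S"
  by (subst sum_hpart[of v]) (rule sum.mono_neutral_left, auto)

lemma decompI:
  assumes "finite S" and "\<And>p. c p \<in> Vh (fst p) (snd p)" and "\<And>p. p \<notin> S \<Longrightarrow> c p = 0"
    and "v = sum c S"
  shows "decomp Vh v c"
  unfolding decomp_def
proof (intro conjI allI)
  show "finite {p. c p \<noteq> 0}" using assms(3) by (blast intro: finite_subset[OF _ assms(1)])
  show "v = sum c {p. c p \<noteq> 0}"
    unfolding assms(4) by (rule sum.mono_neutral_right[OF assms(1)]) (use assms(3) in auto)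
qed (fact assms(2))

lemma hpart_add: "hpart (x + y) = (\<lambda>p. hpart x p + hpart y p)"
proof (rule hpart_unique, rule decompI)
  let ?S = "{p. hpart x p \<noteq> 0} \<union> {p. hpart y p \<noteq> 0}"
  show "finite ?S" using finite_hpart_support by auto
  show "hpart x p + hpart y p \<in> Vh (fst p) (snd p)" for p
    by (rule subspace_add[OF subspace_Vh hpart_in_Vh hpart_in_Vh])
  have "x = sum (hpart x) ?S" "y = sum (hpart y) ?S"
    by (rule sum_hpart_superset; use finite_hpart_support in auto)+
  then have "x + y = sum (hpart x) ?S + sum (hpart y) ?S" by (rule arg_cong2[where f="(+)"])
  then show "x + y = (\<Sum>p\<in>?S. hpart x p + hpart y p)" by (simp only: sum.distrib)
qed auto

lemma hpart_scale: "hpart (sc c x) = (\<lambda>p. sc c (hpart x p))"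
proof (rule hpart_unique, rule decompI)
  show "finite {p. hpart x p \<noteq> 0}" by (rule finite_hpart_support)
  show "sc c (hpart x p) \<in> Vh (fst p) (snd p)" for p
    by (rule subspace_scale[OF subspace_Vh hpart_in_Vh])
  show "sc c x = (\<Sum>p\<in>{p. hpart x p \<noteq> 0}. sc c (hpart x p))"
    using arg_cong[OF sum_hpart[of x], of "sc c"] by (simp only: scale_sum_right)
qed auto

lemma hpart_zero: "hpart 0 = (\<lambda>p. 0)"
  by (rule hpart_unique, rule decompI[of "{}"]) (auto intro: subspace_0[OF subspace_Vh])

lemma hpart_homogeneous: "x \<in> Vh a n \<Longrightarrow> hpart x = (\<lambda>p. if p = (a, n) then x else 0)"
  by (rule hpart_unique, rule decompI[of "{(a, n)}"]) (auto intro: subspace_0[OF subspace_Vh])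

lemma wtproj_eq: "wtproj Vh n v = fsum (\<lambda>a. hpart v (a, n))"
  unfolding wtproj_def comp_eq_hpart ..

lemma wtproj_homogeneous:
  assumes "x \<in> Vh a m"
  shows "wtproj Vh n x = (if n = m then x else 0)"
proof -
  have "wtproj Vh n x = fsum (\<lambda>b. if b = a \<and> n = m then x else 0)"
    by (simp add: wtproj_eq hpart_homogeneous[OF assms])
  also have "\<dots> = (if n = m then x else 0)"
    by (subst fsum_eq_single[where a=a]) auto
  finally show ?thesis .
qed

lemma additive_wtproj: "Modules.additive (wtproj Vh n)"
proof
  fix x y
  have "{a. hpart v (a, n) \<noteq> 0} \<subseteq> fst ` {p. hpart v p \<noteq> 0}" for v
    by force
  then have "finite {a. hpart v (a, n) \<noteq> 0}" for v
    using finite_hpart_support by (meson finite_imageI finite_subset)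
  then have S: "finite ({a. hpart x (a, n) \<noteq> 0} \<union> {a. hpart y (a, n) \<noteq> 0})" by blast
  show "wtproj Vh n (x + y) = wtproj Vh n x + wtproj Vh n y"
    unfolding wtproj_eq hpart_add by (subst (1 2 3) fsum_eq_sum[OF S]) (auto simp: sum.distrib)
qed

lemmas wtproj_zero = additive.zero[OF additive_wtproj]
  and wtproj_sum = additive.sum[OF additive_wtproj]

lemma Vh_subset_Vgr: "x \<in> Vh a n \<Longrightarrow> x \<in> Vgr sc Vh a"
  unfolding Vgr_def by (rule span_base) auto

lemma hpart_Vgr_other_degree:
  "v \<in> Vgr sc Vh a \<Longrightarrow> b \<noteq> a \<Longrightarrow> hpart v (b, n) = 0"
  unfolding Vgr_def
proof (induction v rule: span_induct_alt)
  case (step c x y)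
  then obtain m where "x \<in> Vh a m" by auto
  with step show ?case by (simp add: hpart_add hpart_scale hpart_homogeneous)
qed (simp add: hpart_zero)

lemma Vgr_sum_weights:
  assumes "v \<in> Vgr sc Vh a"
  obtains N where "finite N" and "v = (\<Sum>n\<in>N. hpart v (a, n))"
proof
  let ?S = "{p. hpart v p \<noteq> 0}"
  have S: "?S = (\<lambda>n. (a, n)) ` (snd ` ?S)"
    using hpart_Vgr_other_degree[OF assms] by force
  show "finite (snd ` ?S)" using finite_hpart_support by blast
  have "v = sum (hpart v) ?S" by (rule sum_hpart)
  also have "\<dots> = sum (hpart v) ((\<lambda>n. (a, n)) ` (snd ` ?S))" by (rule arg_cong[OF S])
  also have "\<dots> = (\<Sum>n\<in>snd ` ?S. hpart v (a, n))" by (subst sum.reindex) (auto simp: inj_on_def)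
  finally show "v = (\<Sum>n\<in>snd ` ?S. hpart v (a, n))" .
qed

lemma graded_dual_eq_sum_hpart:
  assumes "graded_dual sc Vh v'"
  shows "v' z = (\<Sum>p\<in>{(a, n). \<exists>w\<in>Vh a n. v' w \<noteq> 0}. v' (hpart z p))"
proof -
  let ?W = "{(a, n). \<exists>w\<in>Vh a n. v' w \<noteq> 0}" and ?S = "{p. hpart z p \<noteq> 0}"
  interpret v': additive v' using assms unfolding graded_dual_def by unfold_locales blast
  have fin: "finite (?S \<union> ?W)" using assms finite_hpart_support unfolding graded_dual_def by blast
  have "v' z = (\<Sum>p\<in>?S. v' (hpart z p))"
    by (subst sum_hpart[of z]) (rule v'.sum)
  also have "\<dots> = (\<Sum>p\<in>?S \<union> ?W. v' (hpart z p))"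
    by (rule sum.mono_neutral_left[OF fin]) (auto simp: v'.zero)
  also have "\<dots> = (\<Sum>p\<in>?W. v' (hpart z p))"
    using hpart_in_Vh by (intro sum.mono_neutral_right[OF fin]) fastforce+
  finally show ?thesis .
qed

lemma fsum_scale_one_gchoose: "fsum (\<lambda>j::nat. sc (1 gchoose j) (f j)) = f 0 + f 1"
proof -
  have "fsum (\<lambda>j::nat. sc (1 gchoose j) (f j)) = (\<Sum>j\<in>{0, 1}. sc (1 gchoose j) (f j))"
  proof (rule fsum_eq_sum)
    fix j :: nat assume "j \<notin> {0, 1}"
    then have "j = Suc (Suc (j - 2))" by auto
    then obtain i where "j = Suc (Suc i)" by blast
    then show "sc (1 gchoose j) (f j) = 0"
      by (simp add: gbinomial_Suc_Suc[of 0, simplified] gbinomial_0_left)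
  qed simp
  then show ?thesis by simp
qed

end

locale intertwining_algebra =
  fixes sc :: "complex \<Rightarrow> 'v::ab_group_add \<Rightarrow> 'v"
    and Vh :: "'a::ab_group_add \<Rightarrow> complex \<Rightarrow> 'v set"
    and md :: "'v \<Rightarrow> complex \<Rightarrow> 'v \<Rightarrow> 'v"
    and vac om :: 'v
    and F :: "'a \<Rightarrow> 'a \<Rightarrow> 'a \<Rightarrow> complex" and Om bh :: "'a \<Rightarrow> 'a \<Rightarrow> complex"
  assumes AIA: "AIA sc Vh md vac om F Om bh"
begin

lemma
  shows cocycle: "abelian_3cocycle F Om"
    and exp_bh: "\<forall>a b. exp (2 * pi * \<i> * bh a b) = Om a b * Om b a"
    and graded: "graded_space sc Vh"
    and mode_add_left: "\<forall>u v k w. md (u + v) k w = md u k w + md v k w"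
    and mode_scale_left: "\<forall>c v k w. md (sc c v) k w = sc c (md v k w)"
    and mode_add_right: "\<forall>v k w w'. md v k (w + w') = md v k w + md v k w'"
    and mode_scale_right: "\<forall>c v k w. md v k (sc c w) = sc c (md v k w)"
    and mode_truncation: "\<forall>a1 a2 v1 v2. v1 \<in> Vgr sc Vh a1 \<longrightarrow> v2 \<in> Vgr sc Vh a2 \<longrightarrow>
        (\<forall>k. md v1 k v2 \<in> Vgr sc Vh (a1 + a2)) \<and>
        (\<forall>k. k - bh a1 a2 \<notin> \<int> \<longrightarrow> md v1 k v2 = 0) \<and>
        (\<exists>N::real. \<forall>k. k - bh a1 a2 \<in> \<int> \<and> Re (k - bh a1 a2) > N \<longrightarrow> md v1 k v2 = 0)"
    and vacuum_in_Vh: "vac \<in> Vh 0 0"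
    and vacuum_mode: "\<forall>k w. md vac k w = (if k = -1 then w else 0)"
    and conformal_in_Vh: "om \<in> Vh 0 2"
    and L0_Vh: "\<forall>a n w. w \<in> Vh a n \<longrightarrow> md om 1 w = sc n w"
    and L_minus_one_derivative: "\<forall>v k w. md (md om 0 v) k w = sc (- k) (md v (k - 1) w)"
    and jacobi: "\<forall>a1 a2 a3 v1 v2 v3 (l::int) m k.
        v1 \<in> Vgr sc Vh a1 \<longrightarrow> v2 \<in> Vgr sc Vh a2 \<longrightarrow> v3 \<in> Vgr sc Vh a3 \<longrightarrow>
        (let b = bh a1 a2; c = bh a1 a3 in
          fsum (\<lambda>i::nat. sc ((-1) ^ i * ((of_int l + b) gchoose i))
                  (md v1 (m + of_int l + b - of_nat i) (md v2 (k + of_nat i) v3)))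
          - sc (Bfac F Om a1 a2 a3 * exp (- pi * \<i> * b) * (-1) powi l)
              (fsum (\<lambda>i::nat. sc ((-1) ^ i * ((of_int l + b) gchoose i))
                  (md v2 (k + of_int l + b - of_nat i) (md v1 (m + of_nat i) v3))))
          = (if m - c \<in> \<int> then
               sc (F a1 a2 a3) (fsum (\<lambda>j::nat. sc (m gchoose j)
                  (md (md v1 (of_int l + b + of_nat j) v2) (k + m - of_nat j) v3)))
             else 0))"
  using AIA unfolding AIA_def by - ((elim conjE, assumption)+)

sublocale graded_vector_space sc Vh
  by unfold_locales (rule graded)

lemma additive_mode_left: "Modules.additive (\<lambda>u. md u k w)"
  by unfold_locales (simp add: mode_add_left)

lemma additive_mode_right: "Modules.additive (md v k)"
  by unfold_locales (simp add: mode_add_right)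

lemmas mode_zero_left = additive.zero[OF additive_mode_left]
  and mode_zero_right = additive.zero[OF additive_mode_right]
  and mode_sum_left = additive.sum[OF additive_mode_left]
  and mode_sum_right = additive.sum[OF additive_mode_right]

lemma F_nonzero: "F a b c \<noteq> 0"
  using cocycle unfolding abelian_3cocycle_def by blast

lemma F_normalized: "F 0 a b = 1" "F a 0 b = 1" "F a b 0 = 1"
  using cocycle unfolding abelian_3cocycle_def by blast+

lemma Om_zero_left: "Om 0 a = 1"
proof -
  have "F 0 0 a * Om (0 + 0) a * F a 0 0 = Om 0 a * F 0 a 0 * Om 0 a"
    using cocycle unfolding abelian_3cocycle_def by blast
  then have "Om 0 a = Om 0 a * Om 0 a" by (simp add: F_normalized)
  moreover have "Om 0 a \<noteq> 0" using cocycle unfolding abelian_3cocycle_def by blast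
  ultimately show ?thesis by simp
qed

lemma Bfac_zero_left: "Bfac F Om 0 a b = 1"
  unfolding Bfac_def by (simp add: F_normalized Om_zero_left)

text \<open>The vacuum is the identity operator, so its only mode on a nonzero \<open>v\<close> is
  \<open>-1\<close>; the monodromy exponent \<open>bh 0 a\<close> must therefore be an integer.\<close>
lemma bh_zero_left_Ints:
  assumes "v \<in> Vgr sc Vh a" and "v \<noteq> 0"
  shows "bh 0 a \<in> \<int>"
proof -
  have "(-1) - bh 0 a \<notin> \<int> \<Longrightarrow> md vac (-1) v = 0"
    using mode_truncation[rule_format, OF Vh_subset_Vgr[OF vacuum_in_Vh] assms(1)] by blast
  moreover have "md vac (-1) v = v" by (simp add: vacuum_mode)
  ultimately have "(-1) - bh 0 a \<in> \<int>" using assms(2) by auto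
  then have "-1 - ((-1) - bh 0 a) \<in> \<int>" by (intro Ints_diff) auto
  then show ?thesis by simp
qed

text \<open>The Jacobi identity with \<open>l = - bh 0 a\<close> for a vector of degree \<open>0\<close>: the two sums on
  the left-hand side collapse to their first terms.\<close>
lemma commutator_formula:
  assumes u: "u \<in> Vgr sc Vh 0" and v: "v \<in> Vgr sc Vh a" and w: "w \<in> Vgr sc Vh b"
    and t: "bh 0 a = of_int t" and m: "m - bh 0 b \<in> \<int>"
  shows "md u m (md v k w) - md v k (md u m w)
    = fsum (\<lambda>j::nat. sc (m gchoose j) (md (md u (of_nat j) v) (k + m - of_nat j) w))"
proof -
  have "fsum (\<lambda>i::nat. sc ((-1) ^ i * ((of_int (-t) + bh 0 a) gchoose i))
                  (md u (m + of_int (-t) + bh 0 a - of_nat i) (md v (k + of_nat i) w)))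
          - sc (Bfac F Om 0 a b * exp (- pi * \<i> * bh 0 a) * (-1) powi (-t))
              (fsum (\<lambda>i::nat. sc ((-1) ^ i * ((of_int (-t) + bh 0 a) gchoose i))
                  (md v (k + of_int (-t) + bh 0 a - of_nat i) (md u (m + of_nat i) w))))
          = sc (F 0 a b) (fsum (\<lambda>j::nat. sc (m gchoose j)
                  (md (md u (of_int (-t) + bh 0 a + of_nat j) v) (k + m - of_nat j) w)))"
    using jacobi[rule_format, OF u v w, of "-t" m k] m unfolding Let_def by simp
  moreover have "fsum (\<lambda>i::nat. sc ((-1) ^ i * ((of_int (-t) + bh 0 a) gchoose i))
                  (md u (m + of_int (-t) + bh 0 a - of_nat i) (md v (k + of_nat i) w)))
      = md u m (md v k w)"
    by (subst fsum_eq_single[where a=0]) (auto simp: t gbinomial_0_left)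
  moreover have "fsum (\<lambda>i::nat. sc ((-1) ^ i * ((of_int (-t) + bh 0 a) gchoose i))
                  (md v (k + of_int (-t) + bh 0 a - of_nat i) (md u (m + of_nat i) w)))
      = md v k (md u m w)"
    by (subst fsum_eq_single[where a=0]) (auto simp: t gbinomial_0_left)
  moreover have "Bfac F Om 0 a b * exp (- pi * \<i> * bh 0 a) * (-1) powi (-t) = 1"
    using exp_pi_of_int_powi[of t] by (simp add: Bfac_zero_left t)
  ultimately show ?thesis by (simp add: F_normalized t)
qed

lemma L0_mode:
  assumes v: "v \<in> Vh a n1" and w: "w \<in> Vh b n2"
  shows "md om 1 (md v k w) = sc (n1 + n2 - k - 1) (md v k w)"
proof (cases "v = 0 \<or> w = 0")
  case True
  then show ?thesis by (auto simp: mode_zero_left mode_zero_right)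
next
  case False
  have vg: "v \<in> Vgr sc Vh a" and wg: "w \<in> Vgr sc Vh b"
    using v w by (auto intro: Vh_subset_Vgr)
  obtain t where t: "bh 0 a = of_int t"
    using bh_zero_left_Ints[OF vg] False by (auto elim: Ints_cases)
  have "1 - bh 0 b \<in> \<int>" using bh_zero_left_Ints[OF wg] False by auto
  then have "md om 1 (md v k w) - md v k (md om 1 w)
      = fsum (\<lambda>j::nat. sc (1 gchoose j) (md (md om (of_nat j) v) (k + 1 - of_nat j) w))"
    by (rule commutator_formula[OF Vh_subset_Vgr[OF conformal_in_Vh] vg wg t])
  also have "\<dots> = sc (- (k + 1)) (md v k w) + sc n1 (md v k w)"
    using L0_Vh v by (simp add: fsum_scale_one_gchoose L_minus_one_derivative mode_scale_left)
  finally have "md om 1 (md v k w) = sc n2 (md v k w) + sc (- (k + 1)) (md v k w) + sc n1 (md v k w)"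
    using L0_Vh w by (simp add: mode_scale_right algebra_simps)
  also have "\<dots> = sc (n1 + n2 - k - 1) (md v k w)"
    by (simp only: scale_left_distrib[symmetric]) (simp add: algebra_simps)
  finally show ?thesis .
qed

lemma L0_eigenvector_in_Vh:
  assumes u: "u \<in> Vgr sc Vh c" and eigen: "md om 1 u = sc lam u"
  shows "u \<in> Vh c lam"
proof -
  let ?S = "{p. hpart u p \<noteq> 0}"
  have "decomp Vh (md om 1 u) (\<lambda>q. sc (snd q) (hpart u q))"
  proof (rule decompI[of ?S])
    show "sc (snd p) (hpart u p) \<in> Vh (fst p) (snd p)" for p
      by (rule subspace_scale[OF subspace_Vh hpart_in_Vh])
    have "md om 1 u = md om 1 (sum (hpart u) ?S)" by (rule arg_cong[OF sum_hpart])
    also have "\<dots> = (\<Sum>q\<in>?S. sc (snd q) (hpart u q))"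
      by (simp add: mode_sum_right L0_Vh[rule_format, OF hpart_in_Vh])
    finally show "md om 1 u = (\<Sum>q\<in>?S. sc (snd q) (hpart u q))" .
  qed (simp_all add: finite_hpart_support)
  then have "hpart (md om 1 u) = (\<lambda>q. sc (snd q) (hpart u q))" by (rule hpart_unique)
  then have "(\<lambda>q. sc (snd q) (hpart u q)) = (\<lambda>q. sc lam (hpart u q))"
    by (simp add: eigen hpart_scale)
  then have "sc (snd q) (hpart u q) = sc lam (hpart u q)" for q
    by (rule fun_cong)
  then have weight: "hpart u q \<noteq> 0 \<Longrightarrow> snd q = lam" for q
    by (metis scale_cancel_right)
  have degree: "hpart u q \<noteq> 0 \<Longrightarrow> fst q = c" for q
    using hpart_Vgr_other_degree[OF u, of "fst q" "snd q"] by auto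
  have "u = sum (hpart u) ?S" by (rule sum_hpart)
  also have "\<dots> \<in> Vh c lam"
    using weight degree hpart_in_Vh by (intro subspace_sum[OF subspace_Vh]) fastforce
  finally show ?thesis .
qed

lemma mode_in_Vh:
  assumes "v \<in> Vh a n1" and "w \<in> Vh b n2"
  shows "md v k w \<in> Vh (a + b) (n1 + n2 - k - 1)"
proof (rule L0_eigenvector_in_Vh)
  show "md v k w \<in> Vgr sc Vh (a + b)"
    using mode_truncation[rule_format, OF Vh_subset_Vgr Vh_subset_Vgr, OF assms] by blast
  show "md om 1 (md v k w) = sc (n1 + n2 - k - 1) (md v k w)" by (rule L0_mode[OF assms])
qed

lemma mode_truncation_int:
  assumes "x \<in> Vgr sc Vh a" "y \<in> Vgr sc Vh b"
  obtains N :: int where "\<And>k. md x k y \<noteq> 0 \<Longrightarrow> \<exists>j::nat. k = bh a b + of_int N - of_nat j"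
proof -
  obtain N :: real where N: "\<And>k. k - bh a b \<in> \<int> \<Longrightarrow> Re (k - bh a b) > N \<Longrightarrow> md x k y = 0"
    and off: "\<And>k. k - bh a b \<notin> \<int> \<Longrightarrow> md x k y = 0"
    using mode_truncation[rule_format, OF assms] by blast
  have "\<exists>j::nat. k = bh a b + of_int \<lceil>N\<rceil> - of_nat j" if "md x k y \<noteq> 0" for k
  proof -
    have "k - bh a b \<in> \<int>" using off that by blast
    then obtain z :: int where z: "k - bh a b = of_int z" by (auto elim: Ints_cases)
    moreover have "\<not> Re (k - bh a b) > N" using N[of k] that z by auto
    ultimately have "z \<le> \<lceil>N\<rceil>" by (simp add: le_ceiling_iff)
    then have "k = bh a b + of_int \<lceil>N\<rceil> - of_nat (nat (\<lceil>N\<rceil> - z))"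
      using z by (simp add: algebra_simps)
    then show ?thesis by blast
  qed
  then show ?thesis by (rule that)
qed

lemma jacobi_at:
  assumes "v1 \<in> Vgr sc Vh a1" "v2 \<in> Vgr sc Vh a2" "v3 \<in> Vgr sc Vh a3"
    and s: "s = of_int l + bh a1 a2"
  shows "fsum (\<lambda>i::nat. sc ((-1) ^ i * (s gchoose i)) (md v1 (m + s - of_nat i) (md v2 (k + of_nat i) v3)))
          - sc (Bfac F Om a1 a2 a3 * exp (- pi * \<i> * bh a1 a2) * (-1) powi l)
              (fsum (\<lambda>i::nat. sc ((-1) ^ i * (s gchoose i)) (md v2 (k + s - of_nat i) (md v1 (m + of_nat i) v3))))
          = (if m - bh a1 a3 \<in> \<int> then
               sc (F a1 a2 a3) (fsum (\<lambda>j::nat. sc (m gchoose j) (md (md v1 (s + of_nat j) v2) (k + m - of_nat j) v3)))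
             else 0)"
proof -
  have e: "m + of_int l + bh a1 a2 = m + s" "k + of_int l + bh a1 a2 = k + s"
    using s by (simp_all add: add.assoc)
  show ?thesis using jacobi[rule_format, OF assms(1-3), of l m k] unfolding Let_def e s[symmetric] .
qed


definition prod_summand ::
  "('v \<Rightarrow> complex) \<Rightarrow> 'v \<Rightarrow> 'v \<Rightarrow> 'v \<Rightarrow> complex \<Rightarrow> complex \<Rightarrow> complex
    \<Rightarrow> complex \<times> complex \<Rightarrow> complex" where
  "prod_summand phi x y u z1 z2 n =
     (\<lambda>(m, k). phi (md x m (wtproj Vh n (md y k u))) * cpw z1 (- m - 1) * cpw z2 (- k - 1))"

definition iter_summand ::
  "('v \<Rightarrow> complex) \<Rightarrow> 'v \<Rightarrow> 'v \<Rightarrow> 'v \<Rightarrow> complex \<Rightarrow> complex \<Rightarrow> complex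
    \<Rightarrow> complex \<times> complex \<Rightarrow> complex" where
  "iter_summand phi x y u z0 z2 n =
     (\<lambda>(r, s). phi (md (wtproj Vh n (md x r y)) s u) * cpw z0 (- r - 1) * cpw z2 (- s - 1))"

lemma prod_term_eq_fsum: "prod_term Vh md phi x y u z1 z2 n = fsum (prod_summand phi x y u z1 z2 n)"
  unfolding prod_term_def prod_summand_def ..

lemma iter_term_eq_fsum: "iter_term Vh md phi x y u z0 z2 n = fsum (iter_summand phi x y u z0 z2 n)"
  unfolding iter_term_def iter_summand_def ..
end

section \<open>Matrix coefficients of homogeneous vectors\<close>

locale homogeneous_triple = intertwining_algebra sc Vh md vac om F Om bh
  for sc :: "complex \<Rightarrow> 'v::ab_group_add \<Rightarrow> 'v"
    and Vh :: "'a::ab_group_add \<Rightarrow> complex \<Rightarrow> 'v set"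
    and md :: "'v \<Rightarrow> complex \<Rightarrow> 'v \<Rightarrow> 'v"
    and vac om :: 'v
    and F :: "'a \<Rightarrow> 'a \<Rightarrow> 'a \<Rightarrow> complex" and Om bh :: "'a \<Rightarrow> 'a \<Rightarrow> complex" +
  fixes v1 v2 v3 :: 'v and a1 a2 a3 :: 'a and w1 w2 w3 n' :: complex and phi :: "'v \<Rightarrow> complex"
    and N12 N23 N13 :: int and z1 z2 :: complex
  assumes v1: "v1 \<in> Vh a1 w1" and v2: "v2 \<in> Vh a2 w2" and v3: "v3 \<in> Vh a3 w3"
    and phi_add: "\<And>x y. phi (x + y) = phi x + phi y"
    and phi_scale: "\<And>c x. phi (sc c x) = c * phi x"
    and phi_weight: "\<And>a n x. x \<in> Vh a n \<Longrightarrow> n \<noteq> n' \<Longrightarrow> phi x = 0"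
    and top12: "\<And>k. md v1 k v2 \<noteq> 0 \<Longrightarrow> \<exists>j::nat. k = bh a1 a2 + of_int N12 - of_nat j"
    and top23: "\<And>k. md v2 k v3 \<noteq> 0 \<Longrightarrow> \<exists>j::nat. k = bh a2 a3 + of_int N23 - of_nat j"
    and top13: "\<And>k. md v1 k v3 \<noteq> 0 \<Longrightarrow> \<exists>j::nat. k = bh a1 a3 + of_int N13 - of_nat j"
    and z_order: "cmod z1 > cmod z2" "cmod z2 > cmod (z1 - z2)" "cmod (z1 - z2) > 0"
begin

sublocale phi: additive phi
  by unfold_locales (rule phi_add)

abbreviation "z0 \<equiv> z1 - z2"

lemma z_nonzero: "z1 \<noteq> 0" "z2 \<noteq> 0" "z0 \<noteq> 0"
  using z_order by auto

lemma v_in_Vgr: "v1 \<in> Vgr sc Vh a1" "v2 \<in> Vgr sc Vh a2" "v3 \<in> Vgr sc Vh a3"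
  using v1 v2 v3 by (auto intro: Vh_subset_Vgr)

text \<open>Only the summands with modes \<open>(m0 + j, k0 - j)\<close> of the product and
  \<open>(r0 - j, s0 + j)\<close> of the iterate survive, \<open>j \<ge> 0\<close>.\<close>
definition "k0 = bh a2 a3 + of_int N23"
definition "m0 = w1 + w2 + w3 - 2 - n' - k0"
definition "r0 = bh a1 a2 + of_int N12"
definition "s0 = w1 + w2 + w3 - 2 - n' - r0"

definition "prod_coeff j = phi (md v1 (m0 + of_nat j) (md v2 (k0 - of_nat j) v3))"
definition "iter_coeff j = phi (md (md v1 (r0 - of_nat j) v2) (s0 + of_nat j) v3)"

lemma s0_r0: "s0 + r0 = m0 + k0"
  by (simp add: s0_def m0_def)

lemma v1_v2_in_Vh: "md v1 r v2 \<in> Vh (a1 + a2) (w1 + w2 - r - 1)"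
  by (rule mode_in_Vh[OF v1 v2])

lemma v2_v3_in_Vh: "md v2 k v3 \<in> Vh (a2 + a3) (w2 + w3 - k - 1)"
  by (rule mode_in_Vh[OF v2 v3])

lemma v1_v2_vanish: "md v1 (r0 + 1 + of_nat j) v2 = 0"
proof (rule ccontr)
  assume "md v1 (r0 + 1 + of_nat j) v2 \<noteq> 0"
  then obtain j' :: nat where "r0 + 1 + of_nat j = bh a1 a2 + of_int N12 - of_nat j'"
    using top12 by blast
  then have "(of_nat (j + j' + 1) :: complex) = 0" by (simp add: r0_def algebra_simps)
  then show False by (metis of_nat_eq_0_iff add_eq_0_iff_both_eq_0 one_neq_zero)
qed

lemma v2_v3_vanish: "md v2 (k0 - of_nat j + of_nat i) v3 \<noteq> 0 \<Longrightarrow> i \<le> j"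
proof -
  assume "md v2 (k0 - of_nat j + of_nat i) v3 \<noteq> 0"
  then obtain j' :: nat where "k0 - of_nat j + of_nat i = bh a2 a3 + of_int N23 - of_nat j'"
    using top23 by blast
  then have "of_nat (i + j') = (of_nat j :: complex)" by (simp add: k0_def algebra_simps)
  then show ?thesis by (metis of_nat_eq_iff le_add1)
qed

lemma v1_v3_bound: "md v1 x v3 \<noteq> 0 \<Longrightarrow> Re x \<le> Re (bh a1 a3) + of_int N13"
  using top13 by fastforce

lemma phi_product_nonzero: "phi (md v1 m (md v2 k v3)) \<noteq> 0 \<Longrightarrow> m = m0 + k0 - k"
proof -
  assume "phi (md v1 m (md v2 k v3)) \<noteq> 0"
  moreover have "md v1 m (md v2 k v3) \<in> Vh (a1 + (a2 + a3)) (w1 + (w2 + w3 - k - 1) - m - 1)"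
    by (rule mode_in_Vh[OF v1 v2_v3_in_Vh])
  ultimately have "w1 + (w2 + w3 - k - 1) - m - 1 = n'" using phi_weight by blast
  then show ?thesis by (simp add: m0_def algebra_simps)
qed

lemma phi_iterate_nonzero: "phi (md (md v1 r v2) s v3) \<noteq> 0 \<Longrightarrow> s = s0 + r0 - r"
proof -
  assume "phi (md (md v1 r v2) s v3) \<noteq> 0"
  moreover have "md (md v1 r v2) s v3 \<in> Vh (a1 + a2 + a3) ((w1 + w2 - r - 1) + w3 - s - 1)"
    by (rule mode_in_Vh[OF v1_v2_in_Vh v3])
  ultimately have "(w1 + w2 - r - 1) + w3 - s - 1 = n'" using phi_weight by blast
  then show ?thesis by (simp add: s0_def algebra_simps)
qed

lemma prod_term_at:
  "prod_term Vh md phi v1 v2 v3 z1 z2 (w2 + w3 - k0 - 1 + of_nat j)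
    = prod_coeff j * cpw z1 (- (m0 + of_nat j) - 1) * cpw z2 (- (k0 - of_nat j) - 1)"
  unfolding prod_term_def
proof (subst fsum_eq_single[where a="(m0 + of_nat j, k0 - of_nat j)"])
  fix x assume x: "x \<noteq> (m0 + of_nat j, k0 - of_nat j)"
  obtain m k where mk: "x = (m, k)" by force
  show "(case x of (m, k) \<Rightarrow> phi (md v1 m (wtproj Vh (w2 + w3 - k0 - 1 + of_nat j) (md v2 k v3)))
      * cpw z1 (- m - 1) * cpw z2 (- k - 1)) = 0"
  proof (cases "w2 + w3 - k0 - 1 + of_nat j = w2 + w3 - k - 1")
    case True
    then have "k = k0 - of_nat j" by (simp add: algebra_simps)
    then have "phi (md v1 m (md v2 k v3)) = 0" using phi_product_nonzero x mk by force
    then show ?thesis using True mk by (simp add: wtproj_homogeneous[OF v2_v3_in_Vh])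
  next
    case False
    then show ?thesis
      using mk by (simp add: wtproj_homogeneous[OF v2_v3_in_Vh] mode_zero_right phi.zero)
  qed
qed (simp add: wtproj_homogeneous[OF v2_v3_in_Vh] prod_coeff_def)

lemma prod_term_off:
  assumes "n \<notin> range (\<lambda>j::nat. w2 + w3 - k0 - 1 + of_nat j)"
  shows "prod_term Vh md phi v1 v2 v3 z1 z2 n = 0"
  unfolding prod_term_def
proof (rule fsum_neutral)
  fix x obtain m k :: complex where mk: "x = (m, k)" by force
  have "wtproj Vh n (md v2 k v3) = 0"
  proof (cases "md v2 k v3 = 0")
    case False
    then obtain j :: nat where "k = k0 - of_nat j" using top23 unfolding k0_def by blast
    then show ?thesis using assms by (auto simp: wtproj_homogeneous[OF v2_v3_in_Vh])
  qed (simp add: wtproj_zero)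
  then show "(case x of (m, k) \<Rightarrow> phi (md v1 m (wtproj Vh n (md v2 k v3)))
      * cpw z1 (- m - 1) * cpw z2 (- k - 1)) = 0"
    using mk by (simp add: mode_zero_right phi.zero)
qed

lemma iter_term_at:
  "iter_term Vh md phi v1 v2 v3 z0 z2 (w1 + w2 - r0 - 1 + of_nat j)
    = iter_coeff j * cpw z0 (- (r0 - of_nat j) - 1) * cpw z2 (- (s0 + of_nat j) - 1)"
  unfolding iter_term_def
proof (subst fsum_eq_single[where a="(r0 - of_nat j, s0 + of_nat j)"])
  fix x assume x: "x \<noteq> (r0 - of_nat j, s0 + of_nat j)"
  obtain r s :: complex where rs: "x = (r, s)" by force
  show "(case x of (r, s) \<Rightarrow> phi (md (wtproj Vh (w1 + w2 - r0 - 1 + of_nat j) (md v1 r v2)) s v3)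
      * cpw z0 (- r - 1) * cpw z2 (- s - 1)) = 0"
  proof (cases "w1 + w2 - r0 - 1 + of_nat j = w1 + w2 - r - 1")
    case True
    then have "r = r0 - of_nat j" by (simp add: algebra_simps)
    then have "phi (md (md v1 r v2) s v3) = 0" using phi_iterate_nonzero x rs by force
    then show ?thesis using True rs by (simp add: wtproj_homogeneous[OF v1_v2_in_Vh])
  next
    case False
    then show ?thesis
      using rs by (simp add: wtproj_homogeneous[OF v1_v2_in_Vh] mode_zero_left phi.zero)
  qed
qed (simp add: wtproj_homogeneous[OF v1_v2_in_Vh] iter_coeff_def)

lemma iter_term_off:
  assumes "n \<notin> range (\<lambda>j::nat. w1 + w2 - r0 - 1 + of_nat j)"
  shows "iter_term Vh md phi v1 v2 v3 z0 z2 n = 0"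
  unfolding iter_term_def
proof (rule fsum_neutral)
  fix x obtain r s :: complex where rs: "x = (r, s)" by force
  have "wtproj Vh n (md v1 r v2) = 0"
  proof (cases "md v1 r v2 = 0")
    case False
    then obtain j :: nat where "r = r0 - of_nat j" using top12 unfolding r0_def by blast
    then show ?thesis using assms by (auto simp: wtproj_homogeneous[OF v1_v2_in_Vh])
  qed (simp add: wtproj_zero)
  then show "(case x of (r, s) \<Rightarrow> phi (md (wtproj Vh n (md v1 r v2)) s v3)
      * cpw z0 (- r - 1) * cpw z2 (- s - 1)) = 0"
    using rs by (simp add: mode_zero_left phi.zero)
qed

lemma prod_term_factor:
  "prod_coeff j * cpw z1 (- (m0 + of_nat j) - 1) * cpw z2 (- (k0 - of_nat j) - 1)
     = cpw z1 (- m0 - 1) * cpw z2 (- k0 - 1) * (prod_coeff j * (z2 / z1) ^ j)"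
proof -
  have e: "- (m0 + of_nat j) - 1 = (- m0 - 1) - of_nat j" "- (k0 - of_nat j) - 1 = (- k0 - 1) + of_nat j"
    by simp_all
  have "cpw z1 (- (m0 + of_nat j) - 1) = cpw z1 (- m0 - 1) * inverse z1 ^ j"
    unfolding e by (rule cpw_diff_of_nat[OF z_nonzero(1)])
  moreover have "cpw z2 (- (k0 - of_nat j) - 1) = cpw z2 (- k0 - 1) * z2 ^ j"
    unfolding e by (rule cpw_add_of_nat[OF z_nonzero(2)])
  ultimately show ?thesis by (simp add: power_mult_distrib power_inverse mult_ac divide_inverse)
qed

lemma iter_term_factor:
  "iter_coeff j * cpw z0 (- (r0 - of_nat j) - 1) * cpw z2 (- (s0 + of_nat j) - 1)
     = cpw z0 (- r0 - 1) * cpw z2 (- s0 - 1) * (iter_coeff j * (z0 / z2) ^ j)"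
proof -
  have e: "- (r0 - of_nat j) - 1 = (- r0 - 1) + of_nat j" "- (s0 + of_nat j) - 1 = (- s0 - 1) - of_nat j"
    by simp_all
  have "cpw z0 (- (r0 - of_nat j) - 1) = cpw z0 (- r0 - 1) * z0 ^ j"
    unfolding e by (rule cpw_add_of_nat[OF z_nonzero(3)])
  moreover have "cpw z2 (- (s0 + of_nat j) - 1) = cpw z2 (- s0 - 1) * inverse z2 ^ j"
    unfolding e by (rule cpw_diff_of_nat[OF z_nonzero(2)])
  ultimately show ?thesis by (simp add: power_mult_distrib power_inverse mult_ac divide_inverse)
qed

lemma prod_has_sum:
  assumes "summable (\<lambda>j. norm (prod_coeff j * (z2 / z1) ^ j))"
    and "(\<lambda>j. prod_coeff j * (z2 / z1) ^ j) sums X"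
  shows "(prod_term Vh md phi v1 v2 v3 z1 z2 has_sum (cpw z1 (- m0 - 1) * cpw z2 (- k0 - 1) * X)) UNIV"
proof (rule has_sum_supported_on_progression[where b = "w2 + w3 - k0 - 1"])
  show "summable (\<lambda>j. norm (cpw z1 (- m0 - 1) * cpw z2 (- k0 - 1) * (prod_coeff j * (z2 / z1) ^ j)))"
    using summable_mult[OF assms(1), of "norm (cpw z1 (- m0 - 1) * cpw z2 (- k0 - 1))"]
    by (simp add: norm_mult mult.assoc)
  show "prod_term Vh md phi v1 v2 v3 z1 z2 (w2 + w3 - k0 - 1 + of_nat j)
      = cpw z1 (- m0 - 1) * cpw z2 (- k0 - 1) * (prod_coeff j * (z2 / z1) ^ j)" for j
    by (simp only: prod_term_at prod_term_factor)
qed (fact prod_term_off, fact sums_mult[OF assms(2)])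

lemma iter_has_sum:
  assumes "summable (\<lambda>j. norm (iter_coeff j * (z0 / z2) ^ j))"
    and "(\<lambda>j. iter_coeff j * (z0 / z2) ^ j) sums X"
  shows "(iter_term Vh md phi v1 v2 v3 z0 z2 has_sum (cpw z0 (- r0 - 1) * cpw z2 (- s0 - 1) * X)) UNIV"
proof (rule has_sum_supported_on_progression[where b = "w1 + w2 - r0 - 1"])
  show "summable (\<lambda>j. norm (cpw z0 (- r0 - 1) * cpw z2 (- s0 - 1) * (iter_coeff j * (z0 / z2) ^ j)))"
    using summable_mult[OF assms(1), of "norm (cpw z0 (- r0 - 1) * cpw z2 (- s0 - 1))"]
    by (simp add: norm_mult mult.assoc)
  show "iter_term Vh md phi v1 v2 v3 z0 z2 (w1 + w2 - r0 - 1 + of_nat j)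
      = cpw z0 (- r0 - 1) * cpw z2 (- s0 - 1) * (iter_coeff j * (z0 / z2) ^ j)" for j
    by (simp only: iter_term_at iter_term_factor)
qed (fact iter_term_off, fact sums_mult[OF assms(2)])

lemma finite_prod_support: "finite {p. prod_summand phi v1 v2 v3 z1 z2 n p \<noteq> 0}" (is "finite ?S")
proof (rule finite_subset)
  show "?S \<subseteq> (\<lambda>j. (m0 + of_nat j, k0 - of_nat j)) ` {j. of_nat j = n - (w2 + w3 - k0 - 1)}"
  proof
    fix x assume x: "x \<in> ?S"
    obtain m k :: complex where mk: "x = (m, k)" by force
    have "phi (md v1 m (wtproj Vh n (md v2 k v3))) \<noteq> 0" using x mk by (auto simp: prod_summand_def)
    then have n: "n = w2 + w3 - k - 1" and ne: "phi (md v1 m (md v2 k v3)) \<noteq> 0"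
      by (auto simp: wtproj_homogeneous[OF v2_v3_in_Vh] mode_zero_right phi.zero split: if_splits)
    then have "md v2 k v3 \<noteq> 0" by (auto simp: mode_zero_right phi.zero)
    then obtain j :: nat where k: "k = k0 - of_nat j" using top23 unfolding k0_def by blast
    then show "x \<in> (\<lambda>j. (m0 + of_nat j, k0 - of_nat j)) ` {j. of_nat j = n - (w2 + w3 - k0 - 1)}"
      using mk n phi_product_nonzero[OF ne] by auto
  qed
qed (simp add: finite_of_nat_eq)

lemma finite_iter_support: "finite {p. iter_summand phi v1 v2 v3 z0 z2 n p \<noteq> 0}" (is "finite ?S")
proof (rule finite_subset)
  show "?S \<subseteq> (\<lambda>j. (r0 - of_nat j, s0 + of_nat j)) ` {j. of_nat j = n - (w1 + w2 - r0 - 1)}"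
  proof
    fix x assume x: "x \<in> ?S"
    obtain r s :: complex where rs: "x = (r, s)" by force
    have "phi (md (wtproj Vh n (md v1 r v2)) s v3) \<noteq> 0" using x rs by (auto simp: iter_summand_def)
    then have n: "n = w1 + w2 - r - 1" and ne: "phi (md (md v1 r v2) s v3) \<noteq> 0"
      by (auto simp: wtproj_homogeneous[OF v1_v2_in_Vh] mode_zero_left phi.zero split: if_splits)
    then have "md v1 r v2 \<noteq> 0" by (auto simp: mode_zero_left phi.zero)
    then obtain j :: nat where r: "r = r0 - of_nat j" using top12 unfolding r0_def by blast
    then show "x \<in> (\<lambda>j. (r0 - of_nat j, s0 + of_nat j)) ` {j. of_nat j = n - (w1 + w2 - r0 - 1)}"
      using rs n phi_iterate_nonzero[OF ne] by auto
  qed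
qed (simp add: finite_of_nat_eq)

definition "prod_poly q = (\<Sum>i=0..q. (-1) ^ i * ((r0 + 1) gchoose i) * prod_coeff (q - i))"
definition "prod_deg = nat \<lceil>of_int N13 - Re (m0 - (r0 + 1) - bh a1 a3)\<rceil>"

lemma phi_fsum_product_modes:
  "phi (fsum (\<lambda>i::nat. sc ((-1) ^ i * (s gchoose i))
      (md v1 (x - of_nat i) (md v2 (k0 - of_nat q + of_nat i) v3))))
   = (\<Sum>i=0..q. (-1) ^ i * (s gchoose i) * phi (md v1 (x - of_nat i) (md v2 (k0 - of_nat (q - i)) v3)))"
proof -
  have "phi (fsum (\<lambda>i::nat. sc ((-1) ^ i * (s gchoose i))
      (md v1 (x - of_nat i) (md v2 (k0 - of_nat q + of_nat i) v3))))
     = (\<Sum>i=0..q. phi (sc ((-1) ^ i * (s gchoose i))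
      (md v1 (x - of_nat i) (md v2 (k0 - of_nat q + of_nat i) v3))))"
  proof (rule phi.fsum)
    fix i assume "i \<notin> {0..q}"
    then have "md v2 (k0 - of_nat q + of_nat i) v3 = 0" using v2_v3_vanish by fastforce
    then show "sc ((-1) ^ i * (s gchoose i)) (md v1 (x - of_nat i) (md v2 (k0 - of_nat q + of_nat i) v3)) = 0"
      by (simp add: mode_zero_right)
  qed simp
  also have "\<dots> = (\<Sum>i=0..q. (-1) ^ i * (s gchoose i) * phi (md v1 (x - of_nat i) (md v2 (k0 - of_nat (q - i)) v3)))"
  proof (intro sum.cong refl)
    fix i assume "i \<in> {0..q}"
    then have e: "k0 - of_nat q + of_nat i = k0 - of_nat (q - i)" by (simp add: of_nat_diff)
    show "phi (sc ((-1) ^ i * (s gchoose i)) (md v1 (x - of_nat i) (md v2 (k0 - of_nat q + of_nat i) v3)))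
      = (-1) ^ i * (s gchoose i) * phi (md v1 (x - of_nat i) (md v2 (k0 - of_nat (q - i)) v3))"
      unfolding e by (rule phi_scale)
  qed
  finally show ?thesis .
qed

text \<open>Jacobi identity with \<open>l = N12 + 1\<close>: its right-hand side vanishes since \<open>v1\<close> has no
  modes above \<open>r0\<close> on \<open>v2\<close>, and for large \<open>q\<close> so does the second term, as \<open>v1\<close> has no
  modes above \<open>bh a1 a3 + N13\<close> on \<open>v3\<close>.\<close>
lemma prod_poly_vanish:
  assumes "prod_deg < q"
  shows "prod_poly q = 0"
proof -
  let ?m = "m0 + of_nat q - (r0 + 1)" and ?k = "k0 - of_nat q" and ?s = "r0 + 1"
  have s: "?s = of_int (N12 + 1) + bh a1 a2" by (simp add: r0_def)
  have rhs: "fsum (\<lambda>j::nat. sc (?m gchoose j) (md (md v1 (?s + of_nat j) v2) (?k + ?m - of_nat j) v3)) = 0"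
    by (rule fsum_neutral) (simp only: v1_v2_vanish mode_zero_left scale_zero_right)
  have "md v1 (?m + of_nat i) v3 = 0" for i
  proof (rule ccontr)
    assume "md v1 (?m + of_nat i) v3 \<noteq> 0"
    then have "Re (?m + of_nat i) \<le> Re (bh a1 a3) + of_int N13" by (rule v1_v3_bound)
    then have "q \<le> prod_deg" unfolding prod_deg_def by simp linarith
    then show False using assms by simp
  qed
  then have second: "fsum (\<lambda>i::nat. sc ((-1) ^ i * (?s gchoose i))
      (md v2 (?k + ?s - of_nat i) (md v1 (?m + of_nat i) v3))) = 0"
    by (intro fsum_neutral) (simp add: mode_zero_right)
  have "phi (fsum (\<lambda>i::nat. sc ((-1) ^ i * (?s gchoose i)) (md v1 (?m + ?s - of_nat i) (md v2 (?k + of_nat i) v3)))) = 0"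
    using arg_cong[OF jacobi_at[OF v_in_Vgr s, of ?m ?k], of phi] rhs second by (simp add: phi.zero)
  moreover have "?m + ?s = m0 + of_nat q" by simp
  ultimately have "(\<Sum>i=0..q. (-1) ^ i * (?s gchoose i)
      * phi (md v1 (m0 + of_nat q - of_nat i) (md v2 (k0 - of_nat (q - i)) v3))) = 0"
    using phi_fsum_product_modes[of ?s "m0 + of_nat q" q] by simp
  also have "(\<Sum>i=0..q. (-1) ^ i * (?s gchoose i)
      * phi (md v1 (m0 + of_nat q - of_nat i) (md v2 (k0 - of_nat (q - i)) v3))) = prod_poly q"
    unfolding prod_poly_def prod_coeff_def
  proof (intro sum.cong refl)
    fix i assume "i \<in> {0..q}"
    then have e: "m0 + of_nat q - of_nat i = m0 + of_nat (q - i)" by (simp add: of_nat_diff)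
    show "(-1) ^ i * (?s gchoose i) * phi (md v1 (m0 + of_nat q - of_nat i) (md v2 (k0 - of_nat (q - i)) v3))
      = (-1) ^ i * (?s gchoose i) * phi (md v1 (m0 + of_nat (q - i)) (md v2 (k0 - of_nat (q - i)) v3))"
      unfolding e ..
  qed
  finally show ?thesis .
qed

lemma norm_z2_z1: "norm (z2 / z1) < 1"
  using z_order z_nonzero by (simp add: norm_divide divide_less_eq)

lemma norm_z0_z2: "norm (z0 / z2) < 1"
  using z_order z_nonzero by (simp add: norm_divide divide_less_eq)

lemma prod_coeff_series:
  shows "summable (\<lambda>j. norm (prod_coeff j * (z2 / z1) ^ j))"
    and "(\<lambda>j. prod_coeff j * (z2 / z1) ^ j) sums
           ((1 - z2 / z1) powr (- (r0 + 1)) * (\<Sum>q\<le>prod_deg. prod_poly q * (z2 / z1) ^ q))"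
  using sums_reflected_binomial_times_poly[where J=prod_deg and alpha="r0 + 1" and c=prod_coeff,
      OF _ norm_z2_z1] prod_poly_vanish
  unfolding prod_poly_def by auto

definition "jacobi_lhs m q = fsum (\<lambda>i::nat. sc ((-1) ^ i * ((r0 - of_nat q) gchoose i))
    (md v1 (m + (r0 - of_nat q) - of_nat i) (md v2 ((s0 + of_nat q - m) + of_nat i) v3)))"

text \<open>Jacobi identity with \<open>l = N12 - q\<close> and a mode \<open>m\<close> of \<open>v1\<close> that kills \<open>v3\<close>.\<close>
lemma phi_jacobi_lhs:
  assumes m: "\<And>i. md v1 (m + of_nat i) v3 = 0"
  shows "phi (jacobi_lhs m q)
    = (if m - bh a1 a3 \<in> \<int> then F a1 a2 a3 * (\<Sum>j=0..q. (m gchoose j) * iter_coeff (q - j)) else 0)"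
proof -
  let ?s = "r0 - of_nat q" and ?k = "s0 + of_nat q - m"
  have s: "?s = of_int (N12 - int q) + bh a1 a2" by (simp add: r0_def)
  have second: "fsum (\<lambda>i::nat. sc ((-1) ^ i * (?s gchoose i)) (md v2 (?k + ?s - of_nat i) (md v1 (m + of_nat i) v3))) = 0"
    by (rule fsum_neutral) (simp add: m mode_zero_right)
  have "phi (fsum (\<lambda>j::nat. sc (m gchoose j) (md (md v1 (?s + of_nat j) v2) (?k + m - of_nat j) v3)))
     = (\<Sum>j=0..q. phi (sc (m gchoose j) (md (md v1 (?s + of_nat j) v2) (?k + m - of_nat j) v3)))"
  proof (rule phi.fsum)
    fix j assume "j \<notin> {0..q}"
    then have e: "?s + of_nat j = r0 + 1 + of_nat (j - q - 1)" by (simp add: of_nat_diff)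
    show "sc (m gchoose j) (md (md v1 (?s + of_nat j) v2) (?k + m - of_nat j) v3) = 0"
      unfolding e by (simp add: v1_v2_vanish mode_zero_left)
  qed simp
  also have "\<dots> = (\<Sum>j=0..q. (m gchoose j) * iter_coeff (q - j))"
  proof (intro sum.cong refl)
    fix j assume "j \<in> {0..q}"
    then have e: "?s + of_nat j = r0 - of_nat (q - j)" "?k + m - of_nat j = s0 + of_nat (q - j)"
      by (simp_all add: of_nat_diff)
    show "phi (sc (m gchoose j) (md (md v1 (?s + of_nat j) v2) (?k + m - of_nat j) v3))
        = (m gchoose j) * iter_coeff (q - j)"
      unfolding e iter_coeff_def by (rule phi_scale)
  qed
  finally show ?thesis
    using arg_cong[OF jacobi_at[OF v_in_Vgr s, of m ?k], of phi] second
    by (simp add: jacobi_lhs_def phi_scale phi.zero)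
qed

text \<open>For \<open>m = m_shift\<close> the modes \<open>md v1 (m + i)\<close> kill \<open>v3\<close> and the left-hand side of the
  Jacobi identity consists of product coefficients, so it expresses the convolutions of
  \<open>iter_coeff\<close> with \<open>m_shift gchoose -\<close> through \<open>prod_coeff\<close>.\<close>
definition "shift = prod_deg + nat \<lceil>of_int N13 - Re (m0 - r0 - bh a1 a3)\<rceil> + 1"
definition "m_shift = m0 - r0 + of_nat shift"

lemma prod_deg_le_shift: "prod_deg \<le> shift"
  by (simp add: shift_def)

lemma v1_v3_vanish_shift: "md v1 (m_shift + of_nat i) v3 = 0"
proof (rule ccontr)
  assume "md v1 (m_shift + of_nat i) v3 \<noteq> 0"
  then have "Re (m_shift + of_nat i) \<le> Re (bh a1 a3) + of_int N13" by (rule v1_v3_bound)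
  moreover have "real shift > of_int N13 - Re (m0 - r0 - bh a1 a3)" unfolding shift_def by linarith
  ultimately show False by (simp add: m_shift_def)
qed

definition "shifted_coeff q = (if q \<le> shift
    then (\<Sum>i=0..shift-q. (-1) ^ i * ((r0 - of_nat q) gchoose i) * prod_coeff (shift - q - i)) else 0)"

lemma phi_jacobi_lhs_shift: "phi (jacobi_lhs m_shift q) = shifted_coeff q"
proof (cases "q \<le> shift")
  case True
  have "m_shift + (r0 - of_nat q) = m0 + of_nat (shift - q)"
    and "s0 + of_nat q - m_shift = k0 - of_nat (shift - q)"
    using True s0_r0 by (simp_all add: m_shift_def of_nat_diff algebra_simps)
  then have "phi (jacobi_lhs m_shift q) = (\<Sum>i=0..shift-q. (-1) ^ i * ((r0 - of_nat q) gchoose i)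
      * phi (md v1 (m0 + of_nat (shift - q) - of_nat i) (md v2 (k0 - of_nat (shift - q - i)) v3)))"
    unfolding jacobi_lhs_def by (simp only: phi_fsum_product_modes)
  also have "\<dots> = shifted_coeff q"
    unfolding shifted_coeff_def prod_coeff_def
  proof (simp only: True if_True, intro sum.cong refl)
    fix i assume "i \<in> {0..shift - q}"
    then have "of_nat (shift - q - i) = (of_nat (shift - q) - of_nat i :: complex)"
      by (intro of_nat_diff) simp
    then have e: "m0 + of_nat (shift - q) - of_nat i = m0 + of_nat (shift - q - i)" by simp
    show "(-1) ^ i * ((r0 - of_nat q) gchoose i)
        * phi (md v1 (m0 + of_nat (shift - q) - of_nat i) (md v2 (k0 - of_nat (shift - q - i)) v3))
      = (-1) ^ i * ((r0 - of_nat q) gchoose i)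
        * phi (md v1 (m0 + of_nat (shift - q - i)) (md v2 (k0 - of_nat (shift - q - i)) v3))"
      unfolding e ..
  qed
  finally show ?thesis .
next
  case False
  have e: "s0 + of_nat q - m_shift = k0 - of_nat 0 + of_nat (q - shift)"
    using False s0_r0 by (simp add: m_shift_def of_nat_diff algebra_simps)
  have "md v2 (k0 - of_nat 0 + of_nat (q - shift + i)) v3 = 0" for i
    using v2_v3_vanish False by fastforce
  then have "jacobi_lhs m_shift q = 0"
    unfolding jacobi_lhs_def e by (intro fsum_neutral) (simp add: mode_zero_right add.assoc)
  then show ?thesis using False by (simp add: shifted_coeff_def phi.zero)
qed

lemma shifted_coeff_eq:
  "q \<le> shift \<Longrightarrow> shifted_coeff q = (\<Sum>i=0..shift-q. of_nat ((i + q) choose i) * prod_poly (shift - q - i))"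
  using reflected_binomial_convolution_shift[where a="r0 + 1" and C=prod_coeff and q=q and n="shift - q"]
  unfolding shifted_coeff_def prod_poly_def by simp

lemma sum_shifted_coeff:
  "(\<Sum>q\<le>shift. shifted_coeff q * u ^ q) = (\<Sum>p\<le>prod_deg. prod_poly p * (1 + u) ^ (shift - p))"
proof -
  have "(\<Sum>q\<le>shift. shifted_coeff q * u ^ q)
      = (\<Sum>q\<le>shift. (\<Sum>i=0..shift-q. of_nat ((i + q) choose i) * prod_poly (shift - q - i)) * u ^ q)"
    by (intro sum.cong refl) (simp add: shifted_coeff_eq)
  also have "\<dots> = (\<Sum>p\<le>prod_deg. prod_poly p * (1 + u) ^ (shift - p))"
    by (rule binomial_reexpansion[OF prod_deg_le_shift prod_poly_vanish])
  finally show ?thesis .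
qed

lemma iter_coeff_series:
  assumes "m_shift - bh a1 a3 \<in> \<int>"
  shows "summable (\<lambda>j. norm (iter_coeff j * (z0 / z2) ^ j))"
    and "(\<lambda>j. iter_coeff j * (z0 / z2) ^ j) sums ((1 + z0 / z2) powr (- m_shift)
           * (inverse (F a1 a2 a3) * (\<Sum>p\<le>prod_deg. prod_poly p * (1 + z0 / z2) ^ (shift - p))))"
proof -
  have conv: "(\<Sum>j=0..q. (m_shift gchoose j) * iter_coeff (q - j)) = inverse (F a1 a2 a3) * shifted_coeff q" for q
    using phi_jacobi_lhs[OF v1_v3_vanish_shift, of q] phi_jacobi_lhs_shift[of q] assms F_nonzero
    by (simp add: field_simps)
  then have "shift < q \<Longrightarrow> (\<Sum>j=0..q. (m_shift gchoose j) * iter_coeff (q - j)) = 0" for q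
    by (simp add: shifted_coeff_def)
  note S = sums_binomial_times_poly[OF this norm_z0_z2]
  show "summable (\<lambda>j. norm (iter_coeff j * (z0 / z2) ^ j))" by (rule S(1))
  show "(\<lambda>j. iter_coeff j * (z0 / z2) ^ j) sums ((1 + z0 / z2) powr (- m_shift)
           * (inverse (F a1 a2 a3) * (\<Sum>p\<le>prod_deg. prod_poly p * (1 + z0 / z2) ^ (shift - p))))"
    using S(2) by (simp add: conv sum_distrib_left mult.assoc sum_shifted_coeff[symmetric])
qed

lemma prod_poly_vanish_nonintegral:
  assumes "m_shift - bh a1 a3 \<notin> \<int>"
  shows "prod_poly p = 0"
proof -
  have shifted_zero: "shifted_coeff q = 0" for q
    using phi_jacobi_lhs[OF v1_v3_vanish_shift, of q] phi_jacobi_lhs_shift[of q] assms by simp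
  have "prod_poly p = 0" if "p \<le> shift" for p
  proof (rule unitriangular_system_zero[where H=shift and x=prod_poly
        and a="\<lambda>q i. of_nat ((i + (shift - q)) choose i)", OF _ _ that])
    fix q assume "q \<le> shift"
    then show "(\<Sum>i=0..q. of_nat ((i + (shift - q)) choose i) * prod_poly (q - i)) = 0"
      using shifted_coeff_eq[of "shift - q"] shifted_zero[of "shift - q"] by simp
  qed simp
  then show "prod_poly p = 0"
    using prod_poly_vanish prod_deg_le_shift by (cases "p \<le> shift") auto
qed

text \<open>Take \<open>m - bh a1 a3\<close> a large integer, so that \<open>md v1 (m + i)\<close> kills \<open>v3\<close>. In the
  non-integral case the modes of \<open>v2\<close> on \<open>v3\<close> in the Jacobi identity all vanish, and the
  iterate coefficients solve a homogeneous unitriangular system.\<close>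
lemma iter_coeff_vanish_nonintegral:
  assumes nonint: "m_shift - bh a1 a3 \<notin> \<int>"
  shows "iter_coeff j = 0"
proof -
  define m where "m = bh a1 a3 + of_nat (nat N13 + 1)"
  have m_vanish: "md v1 (m + of_nat i) v3 = 0" for i
  proof (rule ccontr)
    assume "md v1 (m + of_nat i) v3 \<noteq> 0"
    then have "Re (m + of_nat i) \<le> Re (bh a1 a3) + of_int N13" by (rule v1_v3_bound)
    then show False by (simp add: m_def)
  qed
  have "md v2 ((s0 + of_nat q - m) + of_nat i) v3 = 0" for q i
  proof (rule ccontr)
    assume "md v2 ((s0 + of_nat q - m) + of_nat i) v3 \<noteq> 0"
    then obtain j :: nat where "(s0 + of_nat q - m) + of_nat i = k0 - of_nat j"
      using top23 unfolding k0_def by blast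
    then have "m_shift - bh a1 a3 = of_nat shift + of_nat (nat N13 + 1) - of_nat q - of_nat i - of_nat j"
      using s0_r0 unfolding m_shift_def m_def by algebra
    then show False using nonint by simp
  qed
  then have "jacobi_lhs m q = 0" for q
    unfolding jacobi_lhs_def by (intro fsum_neutral) (simp add: mode_zero_right)
  then have "(\<Sum>j=0..q. (m gchoose j) * iter_coeff (q - j)) = 0" for q
    using phi_jacobi_lhs[OF m_vanish, of q] F_nonzero by (simp add: m_def phi.zero)
  then show "iter_coeff j = 0"
    by (rule unitriangular_system_zero[where H=j and a="\<lambda>q i. m gchoose i"]) simp_all
qed

definition "prod_sum = cpw z1 (- m0 - 1) * cpw z2 (- k0 - 1)
    * ((1 - z2 / z1) powr (- (r0 + 1)) * (\<Sum>q\<le>prod_deg. prod_poly q * (z2 / z1) ^ q))"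

lemma prod_term_has_sum: "(prod_term Vh md phi v1 v2 v3 z1 z2 has_sum prod_sum) UNIV"
  unfolding prod_sum_def by (rule prod_has_sum[OF prod_coeff_series])

lemma lg_z0: "lg z0 = lg z1 + Ln (1 - z2 / z1) + 2 * pi * \<i> * of_int (pint z1 z2)"
  using lg_diff_pint[of z2 z1] z_order z_nonzero by simp

lemma lg_z1: "lg z1 = lg z2 + Ln (1 + z0 / z2) + 2 * pi * \<i> * of_int (pint z2 (z2 - z1))"
proof -
  have "lg (z2 - (z2 - z1)) = lg z2 + Ln (1 - (z2 - z1) / z2) + 2 * pi * \<i> * of_int (pint z2 (z2 - z1))"
    using z_order z_nonzero by (intro lg_diff_pint) (auto simp: norm_minus_commute)
  moreover have "1 - (z2 - z1) / z2 = 1 + z0 / z2" by (simp add: diff_divide_distrib)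
  ultimately show ?thesis by simp
qed

lemma iter_prefactor_branch:
  assumes "m_shift - bh a1 a3 \<in> \<int>"
  shows "cpw z0 (- r0 - 1) * cpw z2 (- s0 - 1) * (1 + z0 / z2) powr (r0 - m0 - of_nat p)
     = exp (2 * pi * \<i> * bh a1 a2) powi (- pint z1 z2) * exp (2 * pi * \<i> * bh a1 a3) powi (pint z2 (z2 - z1))
       * (cpw z1 (- m0 - 1) * cpw z2 (- k0 - 1) * (1 - z2 / z1) powr (- (r0 + 1)) * (z2 / z1) ^ p)"
proof (rule cpw_branch_change[OF z_nonzero(1,2) _ _ lg_z0 lg_z1 _ _ s0_r0])
  show "1 - z2 / z1 \<noteq> 0" using norm_z2_z1 by auto
  show "1 + z0 / z2 \<noteq> 0"
    using norm_z0_z2 by (metis add.inverse_unique norm_minus_cancel norm_one order_less_irrefl)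
  show "r0 + 1 - bh a1 a2 \<in> \<int>" by (simp add: r0_def)
  have e: "bh a1 a3 + r0 - m0 = of_nat shift - (m_shift - bh a1 a3)" by (simp add: m_shift_def)
  show "bh a1 a3 + r0 - m0 \<in> \<int>" unfolding e by (rule Ints_diff[OF Ints_of_nat assms])
qed

lemma Afac_eq: "Afac F Om z1 z2 a1 a2 a3 = exp (2 * pi * \<i> * bh a1 a2) powi (- pint z1 z2)
    * exp (2 * pi * \<i> * bh a1 a3) powi (pint z2 (z2 - z1)) * inverse (F a1 a2 a3)"
  unfolding Afac_def exp_bh[rule_format] ..

lemma iter_term_has_sum_integral:
  assumes int: "m_shift - bh a1 a3 \<in> \<int>"
  shows "(iter_term Vh md phi v1 v2 v3 z0 z2 has_sum (Afac F Om z1 z2 a1 a2 a3 * prod_sum)) UNIV"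
proof -
  let ?u = "z0 / z2" and ?t = "z2 / z1"
    and ?E = "exp (2 * pi * \<i> * bh a1 a2) powi (- pint z1 z2) * exp (2 * pi * \<i> * bh a1 a3) powi (pint z2 (z2 - z1))"
  have "1 + ?u \<noteq> 0"
    using norm_z0_z2 by (metis add.inverse_unique norm_minus_cancel norm_one order_less_irrefl)
  moreover have "- m_shift + of_nat (shift - p) = r0 - m0 - of_nat p" if "p \<le> prod_deg" for p
    using that prod_deg_le_shift by (simp add: m_shift_def of_nat_diff)
  ultimately have shift: "(1 + ?u) powr (- m_shift) * (1 + ?u) ^ (shift - p) = (1 + ?u) powr (r0 - m0 - of_nat p)"
    if "p \<le> prod_deg" for p
    using that powr_nat'[of "1 + ?u" "shift - p"] powr_add[of "1 + ?u" "- m_shift" "of_nat (shift - p)"]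
    by metis
  have "(iter_term Vh md phi v1 v2 v3 z0 z2 has_sum cpw z0 (- r0 - 1) * cpw z2 (- s0 - 1)
      * ((1 + ?u) powr (- m_shift) * (inverse (F a1 a2 a3) * (\<Sum>p\<le>prod_deg. prod_poly p * (1 + ?u) ^ (shift - p))))) UNIV"
    by (rule iter_has_sum[OF iter_coeff_series[OF int]])
  also have "cpw z0 (- r0 - 1) * cpw z2 (- s0 - 1)
      * ((1 + ?u) powr (- m_shift) * (inverse (F a1 a2 a3) * (\<Sum>p\<le>prod_deg. prod_poly p * (1 + ?u) ^ (shift - p))))
    = (\<Sum>p\<le>prod_deg. inverse (F a1 a2 a3) * prod_poly p
        * (cpw z0 (- r0 - 1) * cpw z2 (- s0 - 1) * (1 + ?u) powr (r0 - m0 - of_nat p)))"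
    by (simp add: sum_distrib_left shift mult_ac)
  also have "\<dots> = (\<Sum>p\<le>prod_deg. inverse (F a1 a2 a3) * prod_poly p * (?E
        * (cpw z1 (- m0 - 1) * cpw z2 (- k0 - 1) * (1 - ?t) powr (- (r0 + 1)) * ?t ^ p)))"
    by (intro sum.cong refl) (simp only: iter_prefactor_branch[OF int])
  also have "\<dots> = Afac F Om z1 z2 a1 a2 a3 * prod_sum"
    unfolding Afac_eq prod_sum_def by (simp add: sum_distrib_left mult_ac)
  finally show ?thesis .
qed

lemma homogeneous_associativity:
  "(iter_term Vh md phi v1 v2 v3 z0 z2 has_sum (Afac F Om z1 z2 a1 a2 a3 * prod_sum)) UNIV"
proof (cases "m_shift - bh a1 a3 \<in> \<int>")
  case True
  then show ?thesis by (rule iter_term_has_sum_integral)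
next
  case False
  have "(iter_term Vh md phi v1 v2 v3 z0 z2 has_sum (cpw z0 (- r0 - 1) * cpw z2 (- s0 - 1) * 0)) UNIV"
    by (rule iter_has_sum) (simp_all add: iter_coeff_vanish_nonintegral[OF False])
  moreover have "prod_sum = 0"
    unfolding prod_sum_def by (simp add: prod_poly_vanish_nonintegral[OF False])
  ultimately show ?thesis by simp
qed

end

section \<open>Reduction to homogeneous vectors\<close>

context intertwining_algebra
begin

text \<open>The finiteness of the supports is what makes both matrix coefficients additive in
  each argument, so that the relation passes to finite sums.\<close>
definition assoc_factor ::
  "('v \<Rightarrow> complex) \<Rightarrow> 'v \<Rightarrow> 'v \<Rightarrow> 'v \<Rightarrow> complex \<Rightarrow> complex \<Rightarrow> complex \<Rightarrow> bool" where
  "assoc_factor phi x y u z1 z2 A \<longleftrightarrow>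
     (\<forall>n. finite {p. prod_summand phi x y u z1 z2 n p \<noteq> 0}
        \<and> finite {p. iter_summand phi x y u (z1 - z2) z2 n p \<noteq> 0})
     \<and> (\<exists>S. (iter_term Vh md phi x y u (z1 - z2) z2 has_sum A * S) UNIV
          \<and> (prod_term Vh md phi x y u z1 z2 has_sum S) UNIV)"

lemma assoc_factor_sum:
  assumes I: "finite I" and parts: "\<And>i. i \<in> I \<Longrightarrow> assoc_factor (ph i) (x' i) (y' i) (u' i) z1 z2 A"
    and prod: "\<And>n p. prod_summand phi x y u z1 z2 n p = (\<Sum>i\<in>I. prod_summand (ph i) (x' i) (y' i) (u' i) z1 z2 n p)"
    and iter: "\<And>n p. iter_summand phi x y u (z1 - z2) z2 n p
      = (\<Sum>i\<in>I. iter_summand (ph i) (x' i) (y' i) (u' i) (z1 - z2) z2 n p)"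
  shows "assoc_factor phi x y u z1 z2 A"
proof -
  have fin_prod: "\<And>i n. i \<in> I \<Longrightarrow> finite {p. prod_summand (ph i) (x' i) (y' i) (u' i) z1 z2 n p \<noteq> 0}"
    and fin_iter: "\<And>i n. i \<in> I \<Longrightarrow> finite {p. iter_summand (ph i) (x' i) (y' i) (u' i) (z1 - z2) z2 n p \<noteq> 0}"
    using parts unfolding assoc_factor_def by blast+
  obtain S where S: "\<And>i. i \<in> I \<Longrightarrow> (iter_term Vh md (ph i) (x' i) (y' i) (u' i) (z1 - z2) z2 has_sum A * S i) UNIV
      \<and> (prod_term Vh md (ph i) (x' i) (y' i) (u' i) z1 z2 has_sum S i) UNIV"
    using parts unfolding assoc_factor_def by metis
  have prod_fun: "prod_summand phi x y u z1 z2 n = (\<lambda>p. \<Sum>i\<in>I. prod_summand (ph i) (x' i) (y' i) (u' i) z1 z2 n p)" for n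
    using prod by blast
  have iter_fun: "iter_summand phi x y u (z1 - z2) z2 n
      = (\<lambda>p. \<Sum>i\<in>I. iter_summand (ph i) (x' i) (y' i) (u' i) (z1 - z2) z2 n p)" for n
    using iter by blast
  have "prod_term Vh md phi x y u z1 z2 = (\<lambda>n. \<Sum>i\<in>I. prod_term Vh md (ph i) (x' i) (y' i) (u' i) z1 z2 n)"
    by (rule ext) (simp add: prod_term_eq_fsum prod_fun fsum_sum[OF I fin_prod])
  moreover have "iter_term Vh md phi x y u (z1 - z2) z2
      = (\<lambda>n. \<Sum>i\<in>I. iter_term Vh md (ph i) (x' i) (y' i) (u' i) (z1 - z2) z2 n)"
    by (rule ext) (simp add: iter_term_eq_fsum iter_fun fsum_sum[OF I fin_iter])
  ultimately have "(iter_term Vh md phi x y u (z1 - z2) z2 has_sum A * (\<Sum>i\<in>I. S i)) UNIV"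
    and "(prod_term Vh md phi x y u z1 z2 has_sum (\<Sum>i\<in>I. S i)) UNIV"
    using S by (auto simp: sum_distrib_left intro!: has_sum_sum[OF I])
  moreover have "finite {p. prod_summand phi x y u z1 z2 n p \<noteq> 0}"
    and "finite {p. iter_summand phi x y u (z1 - z2) z2 n p \<noteq> 0}" for n
    unfolding prod_fun iter_fun by (intro finite_support_sum I fin_prod fin_iter; assumption)+
  ultimately show ?thesis unfolding assoc_factor_def by blast
qed

lemma assoc_factor_sum_left:
  assumes "Modules.additive phi" and "finite I" and "\<And>i. i \<in> I \<Longrightarrow> assoc_factor phi (g i) y u z1 z2 A"
  shows "assoc_factor phi (sum g I) y u z1 z2 A"
  by (rule assoc_factor_sum[OF assms(2,3)])
    (simp_all add: prod_summand_def iter_summand_def split_beta mode_sum_left wtproj_sum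
      additive.sum[OF assms(1)] sum_distrib_right)

lemma assoc_factor_sum_middle:
  assumes "Modules.additive phi" and "finite I" and "\<And>i. i \<in> I \<Longrightarrow> assoc_factor phi x (g i) u z1 z2 A"
  shows "assoc_factor phi x (sum g I) u z1 z2 A"
  by (rule assoc_factor_sum[OF assms(2,3)])
    (simp_all add: prod_summand_def iter_summand_def split_beta mode_sum_left mode_sum_right wtproj_sum
      additive.sum[OF assms(1)] sum_distrib_right)

lemma assoc_factor_sum_right:
  assumes "Modules.additive phi" and "finite I" and "\<And>i. i \<in> I \<Longrightarrow> assoc_factor phi x y (g i) z1 z2 A"
  shows "assoc_factor phi x y (sum g I) z1 z2 A"
  by (rule assoc_factor_sum[OF assms(2,3)])
    (simp_all add: prod_summand_def iter_summand_def split_beta mode_sum_right wtproj_sum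
      additive.sum[OF assms(1)] sum_distrib_right)

lemma assoc_factor_sum_functional:
  assumes "finite I" and "\<And>i. i \<in> I \<Longrightarrow> assoc_factor (ph i) x y u z1 z2 A"
    and "\<And>z. phi z = (\<Sum>i\<in>I. ph i z)"
  shows "assoc_factor phi x y u z1 z2 A"
  by (rule assoc_factor_sum[OF assms(1,2)])
    (simp_all add: prod_summand_def iter_summand_def split_beta assms(3) sum_distrib_right)

lemma assoc_factor_homogeneous:
  assumes x: "x \<in> Vh a1 n1" and y: "y \<in> Vh a2 n2" and u: "u \<in> Vh a3 n3"
    and phi_add: "\<And>a b. phi (a + b) = phi a + phi b" and phi_scale: "\<And>c a. phi (sc c a) = c * phi a"
    and phi_weight: "\<And>a n w. w \<in> Vh a n \<Longrightarrow> n \<noteq> n' \<Longrightarrow> phi w = 0"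
    and z_order: "cmod z1 > cmod z2" "cmod z2 > cmod (z1 - z2)" "cmod (z1 - z2) > 0"
  shows "assoc_factor phi x y u z1 z2 (Afac F Om z1 z2 a1 a2 a3)"
proof -
  obtain N12 N23 N13 where
    "\<And>k. md x k y \<noteq> 0 \<Longrightarrow> \<exists>j::nat. k = bh a1 a2 + of_int N12 - of_nat j"
    "\<And>k. md y k u \<noteq> 0 \<Longrightarrow> \<exists>j::nat. k = bh a2 a3 + of_int N23 - of_nat j"
    "\<And>k. md x k u \<noteq> 0 \<Longrightarrow> \<exists>j::nat. k = bh a1 a3 + of_int N13 - of_nat j"
    using mode_truncation_int Vh_subset_Vgr x y u by metis
  then interpret H: homogeneous_triple sc Vh md vac om F Om bh x y u a1 a2 a3 n1 n2 n3 n' phi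
      N12 N23 N13 z1 z2
    using assms by unfold_locales
  show ?thesis
    unfolding assoc_factor_def
    using H.finite_prod_support H.finite_iter_support H.homogeneous_associativity H.prod_term_has_sum
    by blast
qed

lemma assoc_factor_Vgr:
  assumes v1: "v1 \<in> Vgr sc Vh a1" and v2: "v2 \<in> Vgr sc Vh a2" and v3: "v3 \<in> Vgr sc Vh a3"
    and dual: "graded_dual sc Vh v'"
    and z_order: "cmod z1 > cmod z2" "cmod z2 > cmod (z1 - z2)" "cmod (z1 - z2) > 0"
  shows "assoc_factor v' v1 v2 v3 z1 z2 (Afac F Om z1 z2 a1 a2 a3)"
proof -
  let ?A = "Afac F Om z1 z2 a1 a2 a3"
  obtain N1 where N1: "finite N1" "v1 = (\<Sum>n\<in>N1. hpart v1 (a1, n))" using Vgr_sum_weights[OF v1] .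
  obtain N2 where N2: "finite N2" "v2 = (\<Sum>n\<in>N2. hpart v2 (a2, n))" using Vgr_sum_weights[OF v2] .
  obtain N3 where N3: "finite N3" "v3 = (\<Sum>n\<in>N3. hpart v3 (a3, n))" using Vgr_sum_weights[OF v3] .
  interpret v': additive v' using dual unfolding graded_dual_def by unfold_locales blast
  define ph where "ph p z = v' (hpart z p)" for p z
  have ph_add: "Modules.additive (ph p)" for p
    by unfold_locales (simp add: ph_def hpart_add v'.add)
  have ph_scale: "ph p (sc c z) = c * ph p z" for p c z
    using dual by (simp add: ph_def hpart_scale graded_dual_def)
  have ph_weight: "w \<in> Vh a n \<Longrightarrow> n \<noteq> snd p \<Longrightarrow> ph p w = 0" for p a n w
    by (auto simp: ph_def hpart_homogeneous v'.zero)
  have "assoc_factor (ph p) (hpart v1 (a1, n1)) (hpart v2 (a2, n2)) (hpart v3 (a3, n3)) z1 z2 ?A"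
    for p n1 n2 n3
    by (rule assoc_factor_homogeneous[OF _ _ _ additive.add[OF ph_add] ph_scale ph_weight z_order])
      (use hpart_in_Vh in fastforce)+
  then have "assoc_factor (ph p) (hpart v1 (a1, n1)) (hpart v2 (a2, n2)) v3 z1 z2 ?A" for p n1 n2
    by (subst N3(2), rule assoc_factor_sum_right[OF ph_add N3(1)])
  then have "assoc_factor (ph p) (hpart v1 (a1, n1)) v2 v3 z1 z2 ?A" for p n1
    by (subst N2(2), rule assoc_factor_sum_middle[OF ph_add N2(1)])
  then have parts: "assoc_factor (ph p) v1 v2 v3 z1 z2 ?A" for p
    by (subst N1(2), rule assoc_factor_sum_left[OF ph_add N1(1)])
  have "finite {(a, n). \<exists>w\<in>Vh a n. v' w \<noteq> 0}"
    using dual unfolding graded_dual_def by blast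
  then show ?thesis
    by (rule assoc_factor_sum_functional[OF _ parts]) (unfold ph_def, rule graded_dual_eq_sum_hpart[OF dual])
qed

end

theorem mainTheorem15:
  fixes sc :: "complex \<Rightarrow> 'v::ab_group_add \<Rightarrow> 'v"
    and Vh :: "'a::ab_group_add \<Rightarrow> complex \<Rightarrow> 'v set"
    and md :: "'v \<Rightarrow> complex \<Rightarrow> 'v \<Rightarrow> 'v"
    and vac om :: 'v
    and F :: "'a \<Rightarrow> 'a \<Rightarrow> 'a \<Rightarrow> complex" and Om bh :: "'a \<Rightarrow> 'a \<Rightarrow> complex"
    and z1 z2 :: complex and a1 a2 a3 :: 'a and v1 v2 v3 :: 'v and v' :: "'v \<Rightarrow> complex"
  assumes "AIA sc Vh md vac om F Om bh"
    and "cmod z1 > cmod z2" and "cmod z2 > cmod (z1 - z2)" and "cmod (z1 - z2) > 0"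
    and "v1 \<in> Vgr sc Vh a1" and "v2 \<in> Vgr sc Vh a2" and "v3 \<in> Vgr sc Vh a3"
    and "graded_dual sc Vh v'"
  shows "iter_term Vh md v' v1 v2 v3 (z1 - z2) z2 summable_on UNIV
       \<and> prod_term Vh md v' v1 v2 v3 z1 z2 summable_on UNIV
       \<and> (\<Sum>\<^sub>\<infinity>n. iter_term Vh md v' v1 v2 v3 (z1 - z2) z2 n)
           = Afac F Om z1 z2 a1 a2 a3 * (\<Sum>\<^sub>\<infinity>n. prod_term Vh md v' v1 v2 v3 z1 z2 n)"
proof -
  interpret intertwining_algebra sc Vh md vac om F Om bh
    by unfold_locales (fact assms(1))
  have "assoc_factor v' v1 v2 v3 z1 z2 (Afac F Om z1 z2 a1 a2 a3)"
    by (rule assoc_factor_Vgr) (fact assms)+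
  then obtain S where
    "(iter_term Vh md v' v1 v2 v3 (z1 - z2) z2 has_sum Afac F Om z1 z2 a1 a2 a3 * S) UNIV"
    "(prod_term Vh md v' v1 v2 v3 z1 z2 has_sum S) UNIV"
    unfolding assoc_factor_def by blast
  then show ?thesis by (auto simp: summable_on_def infsumI)
qed

end
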